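(* Provably in $\mathsf{GB}^{+\infty}$, and also provably in $\mathsf{GB}^{-\infty}$: every instance of the replacement scheme whose depth is in $\mathsf{C}_{\mathsf{Most}}$ is deemed true by $\mathsf{T}_{\mathsf{Most}}$, i.e. belongs to $\mathsf{T}_{\mathsf{Most}}$.
   Context: $\mathsf{GB}^{+\infty}=\mathsf{GB}$ (Gödel–Bernays); $\mathsf{GB}^{-\infty}=\mathsf{GB}_{\mathsf{fin}}+\mathsf{TC}$ ($\mathsf{GB}$ with infinity replaced by its negation plus existence of transitive closures). Internally, an instance of the replacement scheme for a formula $\varphi(x,y,z)$ is the sentence: for every $z$, if $\forall x\,\exists!y\,\varphi(x,y,z)$, then for every set $v$ there is a set $w=\{y:\exists x\in v\,\varphi(x,y,z)\}$ (possibly nonstandard $\varphi$). $\omega$ is the class of finite ordinals; $c_a$ is a constant naming $a$; $\mathsf{depth}(\varphi)$ is the length of the longest path in the parsing tree of $\varphi$; $\mathsf{Depth}_k$ is the set of $\mathcal{L}_{\mathsf{ZF}}$-formulas of depth $\le k$. A class $T$ is a $\mathsf{Depth}_k$-truth class over $(V,\in)$ if $T$ consists of sentences obtained by substituting constants $c_a$ into formulas in $\mathsf{Depth}_k$, and for such sentences: $\ulcorner c_a=c_b\urcorner\in T\leftrightarrow a=b$, $\ulcorner c_a\in c_b\urcorner\in T\leftrightarrow a\in b$, $\neg\psi\in T\leftrightarrow\psi\notin T$, $(\psi_1\vee\psi_2)\in T\leftrightarrow(\psi_1\in T\vee\psi_2\in T)$, $\exists v\,\psi(v)\in T\leftrightarrow\exists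 x\,\psi(c_x)\in T$. $\mathsf{C}_{\mathsf{Most}}$ is the class of $k\in\omega$ such that some class is a $\mathsf{Depth}_k$-truth class. $\mathsf{T}_{\mathsf{Most}}(x)$: $x$ is a sentence $\varphi(c_{a_1},\dots,c_{a_n})$ ($\varphi$ an $\mathcal{L}_{\mathsf{ZF}}$-formula) and there exist $p\ge\mathsf{depth}(\varphi)$ and a class $T$ with $x\in T$ and $T$ a $\mathsf{Depth}_p$-truth class. *)

theory Defs
  imports Main
begin

text \<open>
A model of a two-sorted class theory: a type of sets with membership E,
and a type of classes with membership C (set in class).
"Provably in theory T" is rendered, via the completeness theorem, as
"holds in every model of T".
\<close>

definition upair :: "('s \<Rightarrow> 's \<Rightarrow> bool) \<Rightarrow> 's \<Rightarrow> 's \<Rightarrow> 's" where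
  "upair E a b = (THE c. \<forall>x. E x c \<longleftrightarrow> x = a \<or> x = b)"

definition opair :: "('s \<Rightarrow> 's \<Rightarrow> bool) \<Rightarrow> 's \<Rightarrow> 's \<Rightarrow> 's" where
  "opair E a b = upair E (upair E a a) (upair E a b)"

definition emp :: "('s \<Rightarrow> 's \<Rightarrow> bool) \<Rightarrow> 's" where
  "emp E = (THE e. \<forall>x. \<not> E x e)"

definition union2 :: "('s \<Rightarrow> 's \<Rightarrow> bool) \<Rightarrow> 's \<Rightarrow> 's \<Rightarrow> 's" where
  "union2 E a b = (THE c. \<forall>x. E x c \<longleftrightarrow> E x a \<or> E x b)"

definition succ :: "('s \<Rightarrow> 's \<Rightarrow> bool) \<Rightarrow> 's \<Rightarrow> 's" where
  "succ E a = union2 E a (upair E a a)"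

fun num :: "('s \<Rightarrow> 's \<Rightarrow> bool) \<Rightarrow> nat \<Rightarrow> 's" where
  "num E 0 = emp E"
| "num E (Suc k) = succ E (num E k)"

definition subset :: "('s \<Rightarrow> 's \<Rightarrow> bool) \<Rightarrow> 's \<Rightarrow> 's \<Rightarrow> bool" where
  "subset E a b \<longleftrightarrow> (\<forall>x. E x a \<longrightarrow> E x b)"

definition transitive :: "('s \<Rightarrow> 's \<Rightarrow> bool) \<Rightarrow> 's \<Rightarrow> bool" where
  "transitive E a \<longleftrightarrow> (\<forall>x y. E x a \<longrightarrow> E y x \<longrightarrow> E y a)"

definition is_ord :: "('s \<Rightarrow> 's \<Rightarrow> bool) \<Rightarrow> 's \<Rightarrow> bool" where
  "is_ord E a \<longleftrightarrow> transitive E a \<and> (\<forall>x. E x a \<longrightarrow> transitive E x) \<and>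
     (\<forall>x y. E x a \<longrightarrow> E y a \<longrightarrow> E x y \<or> x = y \<or> E y x)"

definition zero_or_succ :: "('s \<Rightarrow> 's \<Rightarrow> bool) \<Rightarrow> 's \<Rightarrow> bool" where
  "zero_or_succ E a \<longleftrightarrow> a = emp E \<or> (\<exists>b. a = succ E b)"

definition is_nat :: "('s \<Rightarrow> 's \<Rightarrow> bool) \<Rightarrow> 's \<Rightarrow> bool" where
  "is_nat E n \<longleftrightarrow> is_ord E n \<and> zero_or_succ E n \<and> (\<forall>x. E x n \<longrightarrow> zero_or_succ E x)"

section \<open>Axioms of GB (two-sorted, without global choice)\<close>

datatype cfm = CMem nat nat | CEq nat nat | CIn nat nat | CNeg cfm | CDisj cfm cfm | CEx cfm

text \<open>Satisfaction of predicative formulas (quantifiers over sets only; free set variables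
  and class parameters), de Bruijn indices for set variables.\<close>
fun csat :: "('s \<Rightarrow> 's \<Rightarrow> bool) \<Rightarrow> ('s \<Rightarrow> 'c \<Rightarrow> bool) \<Rightarrow> (nat \<Rightarrow> 's) \<Rightarrow> (nat \<Rightarrow> 'c) \<Rightarrow> cfm \<Rightarrow> bool" where
  "csat E C s c (CMem i j) = E (s i) (s j)"
| "csat E C s c (CEq i j) = (s i = s j)"
| "csat E C s c (CIn i j) = C (s i) (c j)"
| "csat E C s c (CNeg p) = (\<not> csat E C s c p)"
| "csat E C s c (CDisj p q) = (csat E C s c p \<or> csat E C s c q)"
| "csat E C s c (CEx p) = (\<exists>a. csat E C (case_nat a s) c p)"

definition is_opair :: "('s \<Rightarrow> 's \<Rightarrow> bool) \<Rightarrow> 's \<Rightarrow> 's \<Rightarrow> 's \<Rightarrow> bool" where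
  "is_opair E p x y \<longleftrightarrow> (\<exists>s d. (\<forall>z. E z s \<longleftrightarrow> z = x) \<and> (\<forall>z. E z d \<longleftrightarrow> z = x \<or> z = y)
      \<and> (\<forall>z. E z p \<longleftrightarrow> z = s \<or> z = d))"

definition GB_base :: "('s \<Rightarrow> 's \<Rightarrow> bool) \<Rightarrow> ('s \<Rightarrow> 'c \<Rightarrow> bool) \<Rightarrow> bool" where
  "GB_base E C \<longleftrightarrow>
     (\<forall>a b. (\<forall>x. E x a \<longleftrightarrow> E x b) \<longrightarrow> a = b) \<and>
     (\<forall>X Y. (\<forall>x. C x X \<longleftrightarrow> C x Y) \<longrightarrow> X = Y) \<and>
     (\<forall>a b. \<exists>c. \<forall>x. E x c \<longleftrightarrow> x = a \<or> x = b) \<and>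
     (\<forall>a. \<exists>u. \<forall>x. E x u \<longleftrightarrow> (\<exists>y. E y a \<and> E x y)) \<and>
     (\<forall>a. \<exists>p. \<forall>x. E x p \<longleftrightarrow> (\<forall>y. E y x \<longrightarrow> E y a)) \<and>
     (\<forall>a. (\<exists>x. E x a) \<longrightarrow> (\<exists>x. E x a \<and> \<not> (\<exists>y. E y x \<and> E y a))) \<and>
     (\<forall>X a. \<exists>b. \<forall>x. E x b \<longleftrightarrow> E x a \<and> C x X) \<and>
     (\<forall>F a. (\<forall>x y y' p p'. is_opair E p x y \<and> is_opair E p' x y' \<and> C p F \<and> C p' F \<longrightarrow> y = y')
        \<longrightarrow> (\<exists>b. \<forall>y. E y b \<longleftrightarrow> (\<exists>x p. E x a \<and> is_opair E p x y \<and> C p F))) \<and>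
     (\<forall>\<phi> s c. \<exists>X. \<forall>a. C a X \<longleftrightarrow> csat E C (case_nat a s) c \<phi>)"

definition Infinity :: "('s \<Rightarrow> 's \<Rightarrow> bool) \<Rightarrow> bool" where
  "Infinity E \<longleftrightarrow> (\<exists>I. (\<exists>e. E e I \<and> (\<forall>z. \<not> E z e)) \<and>
     (\<forall>x. E x I \<longrightarrow> (\<exists>s. E s I \<and> (\<forall>z. E z s \<longleftrightarrow> E z x \<or> z = x))))"

definition TC_axiom :: "('s \<Rightarrow> 's \<Rightarrow> bool) \<Rightarrow> bool" where
  "TC_axiom E \<longleftrightarrow> (\<forall>a. \<exists>t. subset E a t \<and> transitive E t \<and>
     (\<forall>t'. subset E a t' \<and> transitive E t' \<longrightarrow> subset E t t'))"

text \<open>GB^{+\<infinity>} = GB;  GB^{-\<infinity>} = GB_fin + TC.\<close>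
definition GB_plus :: "('s \<Rightarrow> 's \<Rightarrow> bool) \<Rightarrow> ('s \<Rightarrow> 'c \<Rightarrow> bool) \<Rightarrow> bool" where
  "GB_plus E C \<longleftrightarrow> GB_base E C \<and> Infinity E"

definition GB_minus :: "('s \<Rightarrow> 's \<Rightarrow> bool) \<Rightarrow> ('s \<Rightarrow> 'c \<Rightarrow> bool) \<Rightarrow> bool" where
  "GB_minus E C \<longleftrightarrow> GB_base E C \<and> \<not> Infinity E \<and> TC_axiom E"

section \<open>Internal coding of L_ZF formulas (with constants c_a)\<close>

definition Var :: "('s \<Rightarrow> 's \<Rightarrow> bool) \<Rightarrow> 's \<Rightarrow> 's" where
  "Var E i = opair E (num E 0) i"
definition Const :: "('s \<Rightarrow> 's \<Rightarrow> bool) \<Rightarrow> 's \<Rightarrow> 's" where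
  "Const E a = opair E (num E 1) a"
definition FEq :: "('s \<Rightarrow> 's \<Rightarrow> bool) \<Rightarrow> 's \<Rightarrow> 's \<Rightarrow> 's" where
  "FEq E t s = opair E (num E 2) (opair E t s)"
definition FMem :: "('s \<Rightarrow> 's \<Rightarrow> bool) \<Rightarrow> 's \<Rightarrow> 's \<Rightarrow> 's" where
  "FMem E t s = opair E (num E 3) (opair E t s)"
definition FNeg :: "('s \<Rightarrow> 's \<Rightarrow> bool) \<Rightarrow> 's \<Rightarrow> 's" where
  "FNeg E p = opair E (num E 4) p"
definition FDisj :: "('s \<Rightarrow> 's \<Rightarrow> bool) \<Rightarrow> 's \<Rightarrow> 's \<Rightarrow> 's" where
  "FDisj E p q = opair E (num E 5) (opair E p q)"
definition FEx :: "('s \<Rightarrow> 's \<Rightarrow> bool) \<Rightarrow> 's \<Rightarrow> 's \<Rightarrow> 's" where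
  "FEx E i p = opair E (num E 6) (opair E i p)"

definition is_term :: "('s \<Rightarrow> 's \<Rightarrow> bool) \<Rightarrow> 's \<Rightarrow> bool" where
  "is_term E t \<longleftrightarrow> (\<exists>i. is_nat E i \<and> t = Var E i) \<or> (\<exists>a. t = Const E a)"

definition is_var_term :: "('s \<Rightarrow> 's \<Rightarrow> bool) \<Rightarrow> 's \<Rightarrow> bool" where
  "is_var_term E t \<longleftrightarrow> (\<exists>i. is_nat E i \<and> t = Var E i)"

definition node_ok :: "('s \<Rightarrow> 's \<Rightarrow> bool) \<Rightarrow> ('s \<Rightarrow> bool) \<Rightarrow> 's \<Rightarrow> 's \<Rightarrow> bool" where
  "node_ok E P S y \<longleftrightarrow>
     (\<exists>t s. P t \<and> P s \<and> (y = FEq E t s \<or> y = FMem E t s)) \<or>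
     (\<exists>p. E p S \<and> y = FNeg E p) \<or>
     (\<exists>p q. E p S \<and> E q S \<and> y = FDisj E p q) \<or>
     (\<exists>i p. is_nat E i \<and> E p S \<and> y = FEx E i p)"

text \<open>x is a formula iff it lies in a set closed under taking immediate subformulas
  all of whose elements are well-formed nodes (well-foundedness comes from Foundation).\<close>
definition formula_gen :: "('s \<Rightarrow> 's \<Rightarrow> bool) \<Rightarrow> ('s \<Rightarrow> bool) \<Rightarrow> 's \<Rightarrow> bool" where
  "formula_gen E P x \<longleftrightarrow> (\<exists>S. E x S \<and> (\<forall>y. E y S \<longrightarrow> node_ok E P S y))"

definition is_formula :: "('s \<Rightarrow> 's \<Rightarrow> bool) \<Rightarrow> 's \<Rightarrow> bool" where
  "is_formula E x \<longleftrightarrow> formula_gen E (is_term E) x"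

definition is_LZF :: "('s \<Rightarrow> 's \<Rightarrow> bool) \<Rightarrow> 's \<Rightarrow> bool" where
  "is_LZF E x \<longleftrightarrow> formula_gen E (is_var_term E) x"

text \<open>depth: longest path in the parse tree; atomic formulas have depth 0.
  F is a set of pairs (formula, depth) each justified by the recursive clauses.\<close>
definition depth_ok :: "('s \<Rightarrow> 's \<Rightarrow> bool) \<Rightarrow> 's \<Rightarrow> 's \<Rightarrow> bool" where
  "depth_ok E F p \<longleftrightarrow>
     (\<exists>t s. p = opair E (FEq E t s) (emp E) \<or> p = opair E (FMem E t s) (emp E)) \<or>
     (\<exists>q d. p = opair E (FNeg E q) (succ E d) \<and> E (opair E q d) F) \<or>
     (\<exists>q r d1 d2. p = opair E (FDisj E q r) (succ E (union2 E d1 d2)) \<and>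
         E (opair E q d1) F \<and> E (opair E r d2) F) \<or>
     (\<exists>i q d. p = opair E (FEx E i q) (succ E d) \<and> E (opair E q d) F)"

definition has_depth :: "('s \<Rightarrow> 's \<Rightarrow> bool) \<Rightarrow> 's \<Rightarrow> 's \<Rightarrow> bool" where
  "has_depth E x d \<longleftrightarrow> is_formula E x \<and>
     (\<exists>F. E (opair E x d) F \<and> (\<forall>p. E p F \<longrightarrow> depth_ok E F p))"

definition term_bound :: "('s \<Rightarrow> 's \<Rightarrow> bool) \<Rightarrow> 's \<Rightarrow> 's \<Rightarrow> bool" where
  "term_bound E B t \<longleftrightarrow> (\<exists>a. t = Const E a) \<or> (\<exists>i. t = Var E i \<and> E i B)"

definition free_ok :: "('s \<Rightarrow> 's \<Rightarrow> bool) \<Rightarrow> 's \<Rightarrow> 's \<Rightarrow> bool" where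
  "free_ok E F p \<longleftrightarrow>
     (\<exists>t s B. (p = opair E (FEq E t s) B \<or> p = opair E (FMem E t s) B) \<and>
         term_bound E B t \<and> term_bound E B s) \<or>
     (\<exists>q B. p = opair E (FNeg E q) B \<and> E (opair E q B) F) \<or>
     (\<exists>q r B. p = opair E (FDisj E q r) B \<and> E (opair E q B) F \<and> E (opair E r B) F) \<or>
     (\<exists>i q B. p = opair E (FEx E i q) B \<and> E (opair E q (union2 E B (upair E i i))) F)"

definition free_within :: "('s \<Rightarrow> 's \<Rightarrow> bool) \<Rightarrow> 's \<Rightarrow> 's \<Rightarrow> bool" where
  "free_within E x B \<longleftrightarrow> (\<exists>F. E (opair E x B) F \<and> (\<forall>p. E p F \<longrightarrow> free_ok E F p))"

definition is_sentence :: "('s \<Rightarrow> 's \<Rightarrow> bool) \<Rightarrow> 's \<Rightarrow> bool" where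
  "is_sentence E x \<longleftrightarrow> is_formula E x \<and> free_within E x (emp E)"

text \<open>is_subst E x i a y: y is x with the constant c_a substituted for the free occurrences of v_i.\<close>
definition subst_term :: "('s \<Rightarrow> 's \<Rightarrow> bool) \<Rightarrow> 's \<Rightarrow> 's \<Rightarrow> 's \<Rightarrow> 's" where
  "subst_term E i a t = (if t = Var E i then Const E a else t)"

definition subst_ok :: "('s \<Rightarrow> 's \<Rightarrow> bool) \<Rightarrow> 's \<Rightarrow> 's \<Rightarrow> 's \<Rightarrow> 's \<Rightarrow> bool" where
  "subst_ok E i a F p \<longleftrightarrow>
     (\<exists>t s. p = opair E (FEq E t s) (FEq E (subst_term E i a t) (subst_term E i a s))) \<or>
     (\<exists>t s. p = opair E (FMem E t s) (FMem E (subst_term E i a t) (subst_term E i a s))) \<or>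
     (\<exists>q q'. p = opair E (FNeg E q) (FNeg E q') \<and> E (opair E q q') F) \<or>
     (\<exists>q r q' r'. p = opair E (FDisj E q r) (FDisj E q' r') \<and> E (opair E q q') F \<and> E (opair E r r') F) \<or>
     (\<exists>q. p = opair E (FEx E i q) (FEx E i q)) \<or>
     (\<exists>j q q'. j \<noteq> i \<and> p = opair E (FEx E j q) (FEx E j q') \<and> E (opair E q q') F)"

definition is_subst :: "('s \<Rightarrow> 's \<Rightarrow> bool) \<Rightarrow> 's \<Rightarrow> 's \<Rightarrow> 's \<Rightarrow> 's \<Rightarrow> bool" where
  "is_subst E x i a y \<longleftrightarrow> (\<exists>F. E (opair E x y) F \<and> (\<forall>p. E p F \<longrightarrow> subst_ok E i a F p))"

text \<open>Sentences obtained by substituting constants into formulas of Depth_k.\<close>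
definition in_Depth :: "('s \<Rightarrow> 's \<Rightarrow> bool) \<Rightarrow> 's \<Rightarrow> 's \<Rightarrow> bool" where
  "in_Depth E k x \<longleftrightarrow> is_sentence E x \<and> (\<exists>d. has_depth E x d \<and> subset E d k)"

definition truth_class :: "('s \<Rightarrow> 's \<Rightarrow> bool) \<Rightarrow> ('s \<Rightarrow> 'c \<Rightarrow> bool) \<Rightarrow> 'c \<Rightarrow> 's \<Rightarrow> bool" where
  "truth_class E C T k \<longleftrightarrow>
     (\<forall>x. C x T \<longrightarrow> in_Depth E k x) \<and>
     (\<forall>x. in_Depth E k x \<longrightarrow>
        (\<forall>a b. x = FEq E (Const E a) (Const E b) \<longrightarrow> (C x T \<longleftrightarrow> a = b)) \<and>
        (\<forall>a b. x = FMem E (Const E a) (Const E b) \<longrightarrow> (C x T \<longleftrightarrow> E a b)) \<and>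
        (\<forall>q. x = FNeg E q \<longrightarrow> (C x T \<longleftrightarrow> \<not> C q T)) \<and>
        (\<forall>q r. x = FDisj E q r \<longrightarrow> (C x T \<longleftrightarrow> C q T \<or> C r T)) \<and>
        (\<forall>i q. x = FEx E i q \<longrightarrow> (C x T \<longleftrightarrow> (\<exists>a y. is_subst E q i a y \<and> C y T))))"

definition C_Most :: "('s \<Rightarrow> 's \<Rightarrow> bool) \<Rightarrow> ('s \<Rightarrow> 'c \<Rightarrow> bool) \<Rightarrow> 's \<Rightarrow> bool" where
  "C_Most E C k \<longleftrightarrow> is_nat E k \<and> (\<exists>T. truth_class E C T k)"

definition T_Most :: "('s \<Rightarrow> 's \<Rightarrow> bool) \<Rightarrow> ('s \<Rightarrow> 'c \<Rightarrow> bool) \<Rightarrow> 's \<Rightarrow> bool" where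
  "T_Most E C x \<longleftrightarrow> is_sentence E x \<and>
     (\<exists>d p T. has_depth E x d \<and> is_nat E p \<and> subset E d p \<and> C x T \<and> truth_class E C T p)"

definition FAnd :: "('s \<Rightarrow> 's \<Rightarrow> bool) \<Rightarrow> 's \<Rightarrow> 's \<Rightarrow> 's" where
  "FAnd E p q = FNeg E (FDisj E (FNeg E p) (FNeg E q))"
definition FImp :: "('s \<Rightarrow> 's \<Rightarrow> bool) \<Rightarrow> 's \<Rightarrow> 's \<Rightarrow> 's" where
  "FImp E p q = FDisj E (FNeg E p) q"
definition FIff :: "('s \<Rightarrow> 's \<Rightarrow> bool) \<Rightarrow> 's \<Rightarrow> 's \<Rightarrow> 's" where
  "FIff E p q = FAnd E (FImp E p q) (FImp E q p)"
definition FAll :: "('s \<Rightarrow> 's \<Rightarrow> bool) \<Rightarrow> 's \<Rightarrow> 's \<Rightarrow> 's" where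
  "FAll E i p = FNeg E (FEx E i (FNeg E p))"

text \<open>The code of
  \<forall>z ((\<forall>x \<exists>!y \<phi>) \<rightarrow> \<forall>v \<exists>w \<forall>y (y \<in> w \<leftrightarrow> \<exists>x (x \<in> v \<and> \<phi>))),
  where \<exists>!y \<phi> abbreviates \<exists>y (\<phi> \<and> \<forall>u (\<exists>y (y = u \<and> \<phi>) \<rightarrow> u = y)).\<close>
definition repl_inst :: "('s \<Rightarrow> 's \<Rightarrow> bool) \<Rightarrow> 's \<Rightarrow> 's \<Rightarrow> 's \<Rightarrow> 's \<Rightarrow> 's \<Rightarrow> 's \<Rightarrow> 's \<Rightarrow> 's" where
  "repl_inst E \<phi> x y z u v w =
     FAll E z (FImp E
       (FAll E x (FEx E y (FAnd E \<phi>
          (FAll E u (FImp E (FEx E y (FAnd E (FEq E (Var E y) (Var E u)) \<phi>))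
                            (FEq E (Var E u) (Var E y)))))))
       (FAll E v (FEx E w (FAll E y
          (FIff E (FMem E (Var E y) (Var E w))
                  (FEx E x (FAnd E (FMem E (Var E x) (Var E v)) \<phi>)))))))"

definition is_repl_instance :: "('s \<Rightarrow> 's \<Rightarrow> bool) \<Rightarrow> 's \<Rightarrow> bool" where
  "is_repl_instance E \<sigma> \<longleftrightarrow>
     (\<exists>\<phi> x y z u v w. is_LZF E \<phi> \<and>
        is_nat E x \<and> is_nat E y \<and> is_nat E z \<and> is_nat E u \<and> is_nat E v \<and> is_nat E w \<and>
        distinct [x, y, z, u, v, w] \<and>
        free_within E \<phi> (union2 E (upair E x y) (upair E z z)) \<and>
        \<sigma> = repl_inst E \<phi> x y z u v w)"

end

(* Let T be a Depth_d truth class, where d is the depth of the replacement instance sigma. The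
   outer shape of sigma is standard, so the Tarski clauses of T can be unfolded along it: T deems
   sigma true iff for every parameter c, if every a has exactly one b with T(phi(a, b, c)), then
   every set e has the image {b | some a in e has T(phi(a, b, c))}. The pairs (a, b) with
   T(phi(a, b, c)) form a class by predicative comprehension with T as a class parameter, so this
   is an instance of the replacement axiom of GB.

   Most of the work is internal syntax: substitution of constants into (possibly nonstandard)
   formula codes is given by witness sets inside the model, and its existence, uniqueness and
   interaction with depth, free variables and other substitutions are proved by induction along
   subcodes, which is well-founded by foundation. *)

theory Submission
  imports Defs
begin

datatype pfm = PMem nat nat | PEq nat nat | PIn nat nat | PNeg pfm | PDisj pfm pfm | PEx nat pfm

fun psat :: "('s \<Rightarrow> 's \<Rightarrow> bool) \<Rightarrow> ('s \<Rightarrow> 'c \<Rightarrow> bool) \<Rightarrow> (nat \<Rightarrow> 's) \<Rightarrow> (nat \<Rightarrow> 'c) \<Rightarrow> pfm \<Rightarrow> bool" where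
  "psat E C s c (PMem i j) = E (s i) (s j)"
| "psat E C s c (PEq i j) = (s i = s j)"
| "psat E C s c (PIn i j) = C (s i) (c j)"
| "psat E C s c (PNeg p) = (\<not> psat E C s c p)"
| "psat E C s c (PDisj p q) = (psat E C s c p \<or> psat E C s c q)"
| "psat E C s c (PEx n p) = (\<exists>a. psat E C (s(n := a)) c p)"

text \<open>Class comprehension in \<open>GB_base\<close> is stated for de Bruijn formulas; \<open>cfm_of f\<close> translates
  formulas with named variables into them, \<open>f\<close> mapping names to indices.\<close>
fun cfm_of :: "(nat \<Rightarrow> nat) \<Rightarrow> pfm \<Rightarrow> cfm" where
  "cfm_of f (PMem i j) = CMem (f i) (f j)"
| "cfm_of f (PEq i j) = CEq (f i) (f j)"
| "cfm_of f (PIn i j) = CIn (f i) j"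
| "cfm_of f (PNeg p) = CNeg (cfm_of f p)"
| "cfm_of f (PDisj p q) = CDisj (cfm_of f p) (cfm_of f q)"
| "cfm_of f (PEx n p) = CEx (cfm_of (\<lambda>k. if k = n then 0 else Suc (f k)) p)"

lemma csat_cfm_of: "csat E C s c (cfm_of f p) \<longleftrightarrow> psat E C (s \<circ> f) c p"
proof (induction p arbitrary: f s)
  case (PEx n p)
  have "(\<lambda>k. case if k = n then 0 else Suc (f k) of 0 \<Rightarrow> a | Suc m \<Rightarrow> s m) = (s \<circ> f)(n := a)" for a
    by (rule ext) auto
  then show ?case using PEx by (simp add: comp_def)
qed auto

definition PConj :: "pfm \<Rightarrow> pfm \<Rightarrow> pfm" where "PConj p q = PNeg (PDisj (PNeg p) (PNeg q))"
definition PImp :: "pfm \<Rightarrow> pfm \<Rightarrow> pfm" where "PImp p q = PDisj (PNeg p) q"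
definition PIff :: "pfm \<Rightarrow> pfm \<Rightarrow> pfm" where "PIff p q = PConj (PImp p q) (PImp q p)"
definition PAll :: "nat \<Rightarrow> pfm \<Rightarrow> pfm" where "PAll n p = PNeg (PEx n (PNeg p))"

lemma psat_derived_connectives [simp]:
  "psat E C s c (PConj p q) \<longleftrightarrow> psat E C s c p \<and> psat E C s c q"
  "psat E C s c (PImp p q) \<longleftrightarrow> (psat E C s c p \<longrightarrow> psat E C s c q)"
  "psat E C s c (PIff p q) \<longleftrightarrow> (psat E C s c p \<longleftrightarrow> psat E C s c q)"
  "psat E C s c (PAll n p) \<longleftrightarrow> (\<forall>a. psat E C (s(n := a)) c p)"
  by (auto simp: PConj_def PImp_def PIff_def PAll_def)

text \<open>Variables above \<open>p + x + y\<close> are fresh for \<open>PPair p x y\<close>, and \<open>n\<close> must be fresh for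
  \<open>PPairMem n x y F\<close>.\<close>
definition PPair :: "nat \<Rightarrow> nat \<Rightarrow> nat \<Rightarrow> pfm" where
  "PPair p x y = (let m = p + x + y in
    PEx (m+1) (PEx (m+2) (PConj (PAll (m+3) (PIff (PMem (m+3) (m+1)) (PEq (m+3) x)))
      (PConj (PAll (m+3) (PIff (PMem (m+3) (m+2)) (PDisj (PEq (m+3) x) (PEq (m+3) y))))
         (PAll (m+3) (PIff (PMem (m+3) p) (PDisj (PEq (m+3) (m+1)) (PEq (m+3) (m+2)))))))))"

lemma psat_PPair [simp]: "psat E C s c (PPair p x y) \<longleftrightarrow> is_opair E (s p) (s x) (s y)"
  unfolding PPair_def Let_def is_opair_def by simp

definition PPairMem :: "nat \<Rightarrow> nat \<Rightarrow> nat \<Rightarrow> nat \<Rightarrow> pfm" where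
  "PPairMem n x y F = PEx n (PConj (PPair n x y) (PMem n F))"

lemma psat_PPairMem [simp]:
  "n \<noteq> x \<Longrightarrow> n \<noteq> y \<Longrightarrow> n \<noteq> F \<Longrightarrow>
    psat E C s c (PPairMem n x y F) \<longleftrightarrow> (\<exists>p. is_opair E p (s x) (s y) \<and> E p (s F))"
  unfolding PPairMem_def by simp

fun PDisjs :: "pfm list \<Rightarrow> pfm" where
  "PDisjs [] = PNeg (PEq 0 0)"
| "PDisjs (p # ps) = PDisj p (PDisjs ps)"

lemma psat_PDisjs [simp]: "psat E C s c (PDisjs ps) \<longleftrightarrow> (\<exists>p\<in>set ps. psat E C s c p)"
  by (induction ps) auto

definition is_class :: "('s \<Rightarrow> 'c \<Rightarrow> bool) \<Rightarrow> ('s \<Rightarrow> bool) \<Rightarrow> bool" where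
  "is_class C P \<longleftrightarrow> (\<exists>X. \<forall>a. C a X \<longleftrightarrow> P a)"

section \<open>Set theory in a model of GB\<close>

locale gb_model =
  fixes E :: "'s \<Rightarrow> 's \<Rightarrow> bool" and C :: "'s \<Rightarrow> 'c \<Rightarrow> bool"
  assumes GB_base: "GB_base E C"
begin

lemma GB_base_axioms:
  "\<forall>a b. (\<forall>x. E x a \<longleftrightarrow> E x b) \<longrightarrow> a = b"
  "\<forall>a b. \<exists>c. \<forall>x. E x c \<longleftrightarrow> x = a \<or> x = b"
  "\<forall>a. \<exists>u. \<forall>x. E x u \<longleftrightarrow> (\<exists>y. E y a \<and> E x y)"
  "\<forall>a. \<exists>p. \<forall>x. E x p \<longleftrightarrow> (\<forall>y. E y x \<longrightarrow> E y a)"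
  "\<forall>a. (\<exists>x. E x a) \<longrightarrow> (\<exists>x. E x a \<and> \<not> (\<exists>y. E y x \<and> E y a))"
  "\<forall>X a. \<exists>b. \<forall>x. E x b \<longleftrightarrow> E x a \<and> C x X"
  "\<forall>F a. (\<forall>x y y' p p'. is_opair E p x y \<and> is_opair E p' x y' \<and> C p F \<and> C p' F \<longrightarrow> y = y')
      \<longrightarrow> (\<exists>b. \<forall>y. E y b \<longleftrightarrow> (\<exists>x p. E x a \<and> is_opair E p x y \<and> C p F))"
  "\<forall>\<phi> s c. \<exists>X. \<forall>a. C a X \<longleftrightarrow> csat E C (case_nat a s) c \<phi>"
  using GB_base unfolding GB_base_def by simp_all

lemma extensionality: "(\<And>x. E x a \<longleftrightarrow> E x b) \<Longrightarrow> a = b"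
  using GB_base_axioms(1) by blast

lemma pairing: "\<exists>c. \<forall>x. E x c \<longleftrightarrow> x = a \<or> x = b"
  using GB_base_axioms(2) by blast

lemma union_axiom: "\<exists>u. \<forall>x. E x u \<longleftrightarrow> (\<exists>y. E y a \<and> E x y)"
  using GB_base_axioms(3) by blast

lemma power_axiom: "\<exists>p. \<forall>x. E x p \<longleftrightarrow> (\<forall>y. E y x \<longrightarrow> E y a)"
  using GB_base_axioms(4) by blast

lemma foundation: "E x a \<Longrightarrow> \<exists>x. E x a \<and> \<not> (\<exists>y. E y x \<and> E y a)"
  using GB_base_axioms(5) by blast

lemma replacement:
  "(\<forall>x y y' p p'. is_opair E p x y \<and> is_opair E p' x y' \<and> C p F \<and> C p' F \<longrightarrow> y = y')
    \<Longrightarrow> \<exists>b. \<forall>y. E y b \<longleftrightarrow> (\<exists>x p. E x a \<and> is_opair E p x y \<and> C p F)"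
  using GB_base_axioms(7) by blast

lemma is_class_psat: "is_class C (\<lambda>a. psat E C (s(0 := a)) c \<phi>)"
proof -
  obtain X where X: "\<forall>a. C a X \<longleftrightarrow> csat E C (case_nat a (\<lambda>k. s (Suc k))) c (cfm_of id \<phi>)"
    using GB_base_axioms(8) by blast
  have "case_nat a (\<lambda>k. s (Suc k)) \<circ> id = s(0 := a)" for a
    by (rule ext) (simp split: nat.split)
  then show ?thesis unfolding is_class_def using X by (auto simp: csat_cfm_of)
qed

lemma is_classI: "(\<And>a. P a \<longleftrightarrow> psat E C (s(0 := a)) c \<phi>) \<Longrightarrow> is_class C P"
  using is_class_psat[of s c \<phi>] unfolding is_class_def by simp

lemma is_class_Not: "is_class C P \<Longrightarrow> is_class C (\<lambda>a. \<not> P a)"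
proof -
  assume "is_class C P"
  then obtain X where "\<forall>a. C a X \<longleftrightarrow> P a" unfolding is_class_def by blast
  then show ?thesis by (intro is_classI[of _ "\<lambda>_. undefined" "\<lambda>_. X" "PNeg (PIn 0 0)"]) simp
qed

lemma separation: "is_class C P \<Longrightarrow> \<exists>b. \<forall>x. E x b \<longleftrightarrow> E x a \<and> P x"
  using GB_base_axioms(6) unfolding is_class_def by metis

lemma bounded_class_is_set: "is_class C P \<Longrightarrow> (\<And>x. P x \<Longrightarrow> E x A) \<Longrightarrow> \<exists>b. \<forall>x. E x b \<longleftrightarrow> P x"
  using separation by metis

lemma the_set_mem:
  assumes "\<exists>u. \<forall>x. E x u \<longleftrightarrow> P x"
  shows "E x (THE u. \<forall>x. E x u \<longleftrightarrow> P x) \<longleftrightarrow> P x"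
proof -
  obtain u where u: "\<forall>x. E x u \<longleftrightarrow> P x" using assms by blast
  have "(THE u. \<forall>x. E x u \<longleftrightarrow> P x) = u"
    using u by (intro the_equality) (auto intro: extensionality)
  then show ?thesis using u by simp
qed

lemma upair_mem [simp]: "E x (upair E a b) \<longleftrightarrow> x = a \<or> x = b"
  unfolding upair_def using pairing by (rule the_set_mem)

lemma emp_mem [simp]: "\<not> E x (emp E)"
proof -
  have "is_class C (\<lambda>_. False)" by (rule is_classI[of _ _ _ "PNeg (PEq 0 0)"]) simp
  then have "\<exists>u. \<forall>x. E x u \<longleftrightarrow> False" using separation by metis
  from the_set_mem[OF this] show ?thesis unfolding emp_def by simp
qed

lemma union2_mem [simp]: "E x (union2 E a b) \<longleftrightarrow> E x a \<or> E x b"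
proof -
  obtain u where "\<forall>x. E x u \<longleftrightarrow> (\<exists>y. E y (upair E a b) \<and> E x y)" using union_axiom by blast
  then have "\<exists>u. \<forall>x. E x u \<longleftrightarrow> E x a \<or> E x b" by auto
  from the_set_mem[OF this] show ?thesis unfolding union2_def .
qed

lemma succ_mem [simp]: "E x (succ E a) \<longleftrightarrow> E x a \<or> x = a"
  by (auto simp: succ_def)

lemma upair_eq_iff: "upair E a b = upair E c d \<longleftrightarrow> (a = c \<and> b = d) \<or> (a = d \<and> b = c)"
proof
  assume "upair E a b = upair E c d"
  then have "x = a \<or> x = b \<longleftrightarrow> x = c \<or> x = d" for x by (metis upair_mem)
  then show "(a = c \<and> b = d) \<or> (a = d \<and> b = c)" by metis
qed (auto intro: extensionality)

lemma opair_inj [simp]: "opair E a b = opair E c d \<longleftrightarrow> a = c \<and> b = d"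
  unfolding opair_def upair_eq_iff by metis

lemma is_opair_iff [simp]: "is_opair E p x y \<longleftrightarrow> p = opair E x y"
proof
  assume "is_opair E p x y"
  then obtain s d where s: "\<forall>z. E z s \<longleftrightarrow> z = x" and d: "\<forall>z. E z d \<longleftrightarrow> z = x \<or> z = y"
     and p: "\<forall>z. E z p \<longleftrightarrow> z = s \<or> z = d" unfolding is_opair_def by blast
  have "s = upair E x x" "d = upair E x y" using s d by (auto intro: extensionality)
  then show "p = opair E x y" unfolding opair_def using p by (intro extensionality) simp
next
  assume "p = opair E x y"
  then show "is_opair E p x y" unfolding is_opair_def opair_def
    by (intro exI[of _ "upair E x x"] exI[of _ "upair E x y"]) simp
qed

definition big_union :: "'s \<Rightarrow> 's" where
  "big_union a = (THE u. \<forall>x. E x u \<longleftrightarrow> (\<exists>y. E y a \<and> E x y))"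

lemma big_union_mem [simp]: "E x (big_union a) \<longleftrightarrow> (\<exists>y. E y a \<and> E x y)"
  unfolding big_union_def using union_axiom by (rule the_set_mem)

definition power_set :: "'s \<Rightarrow> 's" where
  "power_set a = (THE p. \<forall>x. E x p \<longleftrightarrow> (\<forall>y. E y x \<longrightarrow> E y a))"

lemma power_set_mem [simp]: "E x (power_set a) \<longleftrightarrow> (\<forall>y. E y x \<longrightarrow> E y a)"
  unfolding power_set_def using power_axiom by (rule the_set_mem)

definition sing :: "'s \<Rightarrow> 's" where "sing x = upair E x x"

lemma sing_mem [simp]: "E y (sing x) \<longleftrightarrow> y = x"
  by (simp add: sing_def)

definition remove :: "'s \<Rightarrow> 's \<Rightarrow> 's" where
  "remove B i = (THE D. \<forall>z. E z D \<longleftrightarrow> E z B \<and> z \<noteq> i)"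

lemma remove_mem [simp]: "E z (remove B i) \<longleftrightarrow> E z B \<and> z \<noteq> i"
proof -
  have "is_class C (\<lambda>z. z \<noteq> i)"
    by (rule is_classI[of _ "\<lambda>_. i" _ "PNeg (PEq 0 1)"]) simp
  then show ?thesis unfolding remove_def by (intro the_set_mem separation)
qed

lemma remove_eq_iff: "D = remove B i \<longleftrightarrow> (\<forall>z. E z D \<longleftrightarrow> E z B \<and> z \<noteq> i)"
  using extensionality[of D "remove B i"] by auto

lemma opair_components_mem:
  "E (opair E a b) F \<Longrightarrow> E a (big_union (big_union F)) \<and> E b (big_union (big_union F))"
  unfolding opair_def big_union_mem by (metis upair_mem)

lemma pair_class_is_set:
  assumes "is_class C P" and "\<And>x. P x \<Longrightarrow> \<exists>a b. x = opair E a b \<and> E a A \<and> E b B"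
  shows "\<exists>Z. \<forall>x. E x Z \<longleftrightarrow> P x"
proof (rule bounded_class_is_set[OF assms(1)])
  fix x assume "P x"
  then obtain a b where "x = opair E a b" "E a A" "E b B" using assms(2) by blast
  then show "E x (power_set (power_set (union2 E A B)))" unfolding opair_def by auto
qed

lemma relcomp_set:
  "\<exists>H. \<forall>w. E w H \<longleftrightarrow> (\<exists>a b c. w = opair E a c \<and> E (opair E a b) F \<and> E (opair E b c) G)"
proof (rule pair_class_is_set[of _ "big_union (big_union F)" "big_union (big_union G)"])
  show "is_class C (\<lambda>w. \<exists>a b c. w = opair E a c \<and> E (opair E a b) F \<and> E (opair E b c) G)"
    by (rule is_classI[of _ "(\<lambda>_. undefined)(1 := F, 2 := G)" "\<lambda>_. undefined"
          "PEx 3 (PEx 4 (PEx 5 (PConj (PPair 0 3 5) (PConj (PPairMem 6 3 4 1) (PPairMem 6 4 5 2)))))"])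
      simp
qed (use opair_components_mem in blast)

lemma image_set: "\<exists>Y. \<forall>w. E w Y \<longleftrightarrow> (\<exists>q. E q A \<and> E (opair E q w) F)"
proof (rule bounded_class_is_set[of _ "big_union (big_union F)"])
  show "is_class C (\<lambda>w. \<exists>q. E q A \<and> E (opair E q w) F)"
    by (rule is_classI[of _ "(\<lambda>_. undefined)(1 := A, 2 := F)" "\<lambda>_. undefined"
          "PEx 3 (PConj (PMem 3 1) (PPairMem 4 3 0 2))"]) simp
qed (use opair_components_mem in blast)

lemma remove_snd_set: "\<exists>Z. \<forall>w. E w Z \<longleftrightarrow> (\<exists>x B. w = opair E x (remove B i) \<and> E (opair E x B) R)"
proof (rule pair_class_is_set[of _ "big_union (big_union R)" "power_set (big_union (big_union (big_union R)))"])
  show "is_class C (\<lambda>w. \<exists>x B. w = opair E x (remove B i) \<and> E (opair E x B) R)"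
    by (rule is_classI[of _ "(\<lambda>_. undefined)(1 := R, 2 := i)" "\<lambda>_. undefined"
          "PEx 3 (PEx 4 (PEx 5 (PConj (PPair 0 3 4) (PConj (PAll 6 (PIff (PMem 6 4)
             (PConj (PMem 6 5) (PNeg (PEq 6 2))))) (PPairMem 6 3 5 1)))))"])
      (simp add: remove_eq_iff[symmetric], blast)
qed (use opair_components_mem in force)

lemma union_snd_set: "\<exists>Z. \<forall>w. E w Z \<longleftrightarrow> (\<exists>x B. w = opair E x (union2 E B B') \<and> E (opair E x B) R)"
proof (rule pair_class_is_set[of _ "big_union (big_union R)" "power_set (union2 E (big_union (big_union (big_union R))) B')"])
  have "(\<forall>z. E z U \<longleftrightarrow> E z B \<or> E z B') \<longleftrightarrow> U = union2 E B B'" for U B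
    using extensionality[of U "union2 E B B'"] by auto
  then show "is_class C (\<lambda>w. \<exists>x B. w = opair E x (union2 E B B') \<and> E (opair E x B) R)"
    by (intro is_classI[of _ "(\<lambda>_. undefined)(1 := R, 2 := B')" "\<lambda>_. undefined"
          "PEx 3 (PEx 4 (PEx 5 (PConj (PPair 0 3 4) (PConj (PAll 6 (PIff (PMem 6 4)
             (PDisj (PMem 6 5) (PMem 6 2)))) (PPairMem 6 3 5 1)))))"]) (simp, blast)
qed (use opair_components_mem in force)

lemma converse_relcomp_set:
  "\<exists>H. \<forall>w. E w H \<longleftrightarrow> (\<exists>a b c. w = opair E b c \<and> E (opair E a b) F \<and> E (opair E a c) G)"
proof (rule pair_class_is_set[of _ "big_union (big_union F)" "big_union (big_union G)"])
  show "is_class C (\<lambda>w. \<exists>a b c. w = opair E b c \<and> E (opair E a b) F \<and> E (opair E a c) G)"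
    by (rule is_classI[of _ "(\<lambda>_. undefined)(1 := F, 2 := G)" "\<lambda>_. undefined"
          "PEx 3 (PEx 4 (PEx 5 (PConj (PPair 0 4 5) (PConj (PPairMem 6 3 4 1) (PPairMem 6 3 5 2)))))"])
      simp
qed (use opair_components_mem in blast)

lemma functional_image:
  assumes "is_class C (\<lambda>p. \<exists>a b. p = opair E a b \<and> R a b)"
    and "\<And>a b b'. R a b \<Longrightarrow> R a b' \<Longrightarrow> b = b'"
  shows "\<exists>f. \<forall>b. E b f \<longleftrightarrow> (\<exists>a. E a e \<and> R a b)"
proof -
  obtain X where X: "\<forall>p. C p X \<longleftrightarrow> (\<exists>a b. p = opair E a b \<and> R a b)"
    using assms(1) unfolding is_class_def by blast
  have "\<forall>a b b' p p'. is_opair E p a b \<and> is_opair E p' a b' \<and> C p X \<and> C p' X \<longrightarrow> b = b'"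
    using X assms(2) by auto
  from replacement[OF this] show ?thesis using X by auto
qed

lemma mem_irrefl: "\<not> E x x"
proof
  assume "E x x"
  obtain y where "E y (sing x)" "\<not> (\<exists>z. E z y \<and> E z (sing x))"
    using foundation[of x "sing x"] by auto
  with \<open>E x x\<close> show False by auto
qed

lemma num_mem: "E x (num E n) \<longleftrightarrow> (\<exists>m<n. x = num E m)"
  by (induction n arbitrary: x) (auto simp: less_Suc_eq)

lemma num_inj [simp]: "num E m = num E n \<longleftrightarrow> m = n"
  by (metis mem_irrefl num_mem linorder_neqE_nat)

lemmas code_defs = Var_def Const_def FEq_def FMem_def FNeg_def FDisj_def FEx_def

lemma code_inj [simp]:
  "Var E i = Var E i' \<longleftrightarrow> i = i'"
  "Const E a = Const E a' \<longleftrightarrow> a = a'"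
  "FEq E t s = FEq E t' s' \<longleftrightarrow> t = t' \<and> s = s'"
  "FMem E t s = FMem E t' s' \<longleftrightarrow> t = t' \<and> s = s'"
  "FNeg E p = FNeg E p' \<longleftrightarrow> p = p'"
  "FDisj E p q = FDisj E p' q' \<longleftrightarrow> p = p' \<and> q = q'"
  "FEx E i p = FEx E i' p' \<longleftrightarrow> i = i' \<and> p = p'"
  by (simp_all add: code_defs del: num.simps)

lemma code_distinct [simp]:
  "Var E i \<noteq> Const E a'" "Var E i \<noteq> FEq E t' s'" "Var E i \<noteq> FMem E t' s'"
  "Var E i \<noteq> FNeg E p'" "Var E i \<noteq> FDisj E p' q'" "Var E i \<noteq> FEx E i' p'"
  "Const E a \<noteq> Var E i'" "Const E a \<noteq> FEq E t' s'" "Const E a \<noteq> FMem E t' s'"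
  "Const E a \<noteq> FNeg E p'" "Const E a \<noteq> FDisj E p' q'" "Const E a \<noteq> FEx E i' p'"
  "FEq E t s \<noteq> Var E i'" "FEq E t s \<noteq> Const E a'" "FEq E t s \<noteq> FMem E t' s'"
  "FEq E t s \<noteq> FNeg E p'" "FEq E t s \<noteq> FDisj E p' q'" "FEq E t s \<noteq> FEx E i' p'"
  "FMem E t s \<noteq> Var E i'" "FMem E t s \<noteq> Const E a'" "FMem E t s \<noteq> FEq E t' s'"
  "FMem E t s \<noteq> FNeg E p'" "FMem E t s \<noteq> FDisj E p' q'" "FMem E t s \<noteq> FEx E i' p'"
  "FNeg E p \<noteq> Var E i'" "FNeg E p \<noteq> Const E a'" "FNeg E p \<noteq> FEq E t' s'"
  "FNeg E p \<noteq> FMem E t' s'" "FNeg E p \<noteq> FDisj E p' q'" "FNeg E p \<noteq> FEx E i' p'"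
  "FDisj E p q \<noteq> Var E i'" "FDisj E p q \<noteq> Const E a'" "FDisj E p q \<noteq> FEq E t' s'"
  "FDisj E p q \<noteq> FMem E t' s'" "FDisj E p q \<noteq> FNeg E p'" "FDisj E p q \<noteq> FEx E i' p'"
  "FEx E i p \<noteq> Var E i'" "FEx E i p \<noteq> Const E a'" "FEx E i p \<noteq> FEq E t' s'"
  "FEx E i p \<noteq> FMem E t' s'" "FEx E i p \<noteq> FNeg E p'" "FEx E i p \<noteq> FDisj E p' q'"
  by (simp_all add: code_defs del: num.simps)

end

section \<open>Induction along subcodes\<close>

fun mem_chain :: "('s \<Rightarrow> 's \<Rightarrow> bool) \<Rightarrow> nat \<Rightarrow> 's \<Rightarrow> 's \<Rightarrow> bool" where
  "mem_chain E 0 a b \<longleftrightarrow> a = b"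
| "mem_chain E (Suc n) a b \<longleftrightarrow> (\<exists>w. E a w \<and> mem_chain E n w b)"

lemma mem_chain_Suc_right: "mem_chain E (Suc n) a b \<longleftrightarrow> (\<exists>w. mem_chain E n a w \<and> E w b)"
  by (induction n arbitrary: a) auto

fun PChain :: "nat \<Rightarrow> nat \<Rightarrow> nat \<Rightarrow> pfm" where
  "PChain 0 a b = PEq a b"
| "PChain (Suc n) a b = PEx (a+b+1) (PConj (PMem a (a+b+1)) (PChain n (a+b+1) b))"

lemma psat_PChain [simp]: "psat E C s c (PChain n a b) \<longleftrightarrow> mem_chain E n (s a) (s b)"
  by (induction n arbitrary: a s) auto

definition subcode :: "('s \<Rightarrow> 's \<Rightarrow> bool) \<Rightarrow> 's \<Rightarrow> 's \<Rightarrow> bool" where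
  "subcode E q0 q \<longleftrightarrow> (\<exists>n. q = opair E n q0) \<or> (\<exists>n r. q = opair E n (opair E q0 r)) \<or>
     (\<exists>n r. q = opair E n (opair E r q0))"

lemma subcode_code [simp]:
  "subcode E p (FNeg E p)" "subcode E p (FDisj E p q)" "subcode E q (FDisj E p q)"
  "subcode E p (FEx E i p)"
  unfolding subcode_def FNeg_def FDisj_def FEx_def by blast+

definition short_path_point :: "('s \<Rightarrow> 's \<Rightarrow> bool) \<Rightarrow> 's \<Rightarrow> 's \<Rightarrow> bool" where
  "short_path_point E B w \<longleftrightarrow>
     (\<exists>q q' j l. E q B \<and> E q' B \<and> j + l \<le> 4 \<and> mem_chain E j q w \<and> mem_chain E l w q')"

definition short_paths :: "(nat \<times> nat) list" where
  "short_paths = filter (\<lambda>(j, l). j + l \<le> 4) (List.product [0..<5] [0..<5])"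

lemma short_paths_mem: "p \<in> set short_paths \<longleftrightarrow> fst p + snd p \<le> 4"
  by (cases p) (auto simp: short_paths_def)

context gb_model
begin

fun union_iterates :: "nat \<Rightarrow> 's \<Rightarrow> 's" where
  "union_iterates 0 B = B"
| "union_iterates (Suc n) B = union2 E B (big_union (union_iterates n B))"

lemma mem_chain_union_iterates: "mem_chain E l w q \<Longrightarrow> E q B \<Longrightarrow> l \<le> n \<Longrightarrow> E w (union_iterates n B)"
proof (induction n arbitrary: l w)
  case (Suc n)
  show ?case
  proof (cases "l = 0")
    case False
    then obtain l' where "l = Suc l'" using not0_implies_Suc by blast
    with Suc.prems obtain v where "E w v" "mem_chain E l' v q" "l' \<le> n" by auto
    with Suc.IH[of l' v] Suc.prems(2) show ?thesis by auto
  qed (use Suc.prems in simp)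
qed simp

lemma is_class_short_path_point: "is_class C (short_path_point E B)"
proof -
  have "short_path_point E B w \<longleftrightarrow> (\<exists>q q'. E q B \<and> E q' B \<and>
      (\<exists>p\<in>set short_paths. mem_chain E (fst p) q w \<and> mem_chain E (snd p) w q'))" for w
    unfolding short_path_point_def Bex_def short_paths_mem split_paired_Ex by auto
  then show ?thesis
    by (intro is_classI[of _ "\<lambda>_. B" "\<lambda>_. undefined" "PEx 2 (PEx 3 (PConj (PMem 2 1) (PConj (PMem 3 1)
        (PDisjs (map (\<lambda>p. PConj (PChain (fst p) 2 0) (PChain (snd p) 0 3)) short_paths)))))"])
      auto
qed

lemma short_path_point_bounded: "short_path_point E B w \<Longrightarrow> E w (union_iterates 4 B)"
  unfolding short_path_point_def using mem_chain_union_iterates by (metis le_add2 le_trans)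

lemma mem_chain_3I: "E x a \<Longrightarrow> E a b \<Longrightarrow> E b w \<Longrightarrow> mem_chain E 3 x w"
  by (auto simp: numeral_eq_Suc)

lemma subcode_below:
  assumes "subcode E q0 q"
  shows "\<exists>w. E w q \<and> (mem_chain E 1 q0 w \<or> mem_chain E 3 q0 w)"
  using assms unfolding subcode_def
proof (elim disjE exE)
  fix n assume "q = opair E n q0"
  then show ?thesis unfolding opair_def by (intro exI[of _ "upair E n q0"]) simp
next
  fix n r assume "q = opair E n (opair E q0 r)"
  then show ?thesis unfolding opair_def
    by (intro exI[of _ "upair E n (opair E q0 r)"] conjI disjI2
        mem_chain_3I[of _ "upair E q0 q0" "opair E q0 r"]) (simp_all add: opair_def)
next
  fix n r assume "q = opair E n (opair E r q0)"
  then show ?thesis unfolding opair_def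
    by (intro exI[of _ "upair E n (opair E r q0)"] conjI disjI2
        mem_chain_3I[of _ "upair E r q0" "opair E r q0"]) (simp_all add: opair_def)
qed

text \<open>A subcode lies two or four \<open>\<in>\<close>-steps below its code. So if every element of \<open>B\<close> had a
  subcode in \<open>B\<close>, the set of points on \<open>\<in>\<close>-paths of length at most 4 between elements of \<open>B\<close>
  would have no \<open>\<in>\<close>-minimal element, contradicting foundation.\<close>
lemma subcodes_wellfounded:
  assumes step: "\<And>q. E q B \<Longrightarrow> \<exists>q0. E q0 B \<and> subcode E q0 q"
  shows "\<not> E x B"
proof
  assume "E x B"
  obtain P where P: "\<forall>w. E w P \<longleftrightarrow> short_path_point E B w"
    using bounded_class_is_set[OF is_class_short_path_point short_path_point_bounded] by blast
  have "short_path_point E B x" unfolding short_path_point_def using \<open>E x B\<close>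
    by (intro exI[of _ x] exI[of _ 0]) simp
  then obtain m where "E m P" and m_min: "\<not> (\<exists>y. E y m \<and> E y P)" using P foundation by blast
  then obtain q q' j l where q: "E q B" "E q' B" "j + l \<le> 4"
    and chains: "mem_chain E j q m" "mem_chain E l m q'"
    using P unfolding short_path_point_def by blast
  obtain y where "E y m" and "short_path_point E B y"
  proof (cases j)
    case 0
    then have "m = q" using chains by simp
    obtain q0 where "E q0 B" "subcode E q0 m" using step q \<open>m = q\<close> by blast
    then obtain w where "E w m" "mem_chain E 1 q0 w \<or> mem_chain E 3 q0 w" using subcode_below by blast
    moreover have "mem_chain E 1 w q" using \<open>E w m\<close> \<open>m = q\<close> by simp
    moreover have "1 + 1 \<le> (4::nat)" "3 + 1 \<le> (4::nat)" by simp_all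
    ultimately show ?thesis using that \<open>E q0 B\<close> q unfolding short_path_point_def by blast
  next
    case (Suc j')
    then obtain v where "mem_chain E j' q v" "E v m" using chains mem_chain_Suc_right by metis
    moreover have "mem_chain E (Suc l) v q'" using \<open>E v m\<close> chains by auto
    moreover have "j' + Suc l \<le> 4" using q Suc by simp
    ultimately show ?thesis using that q unfolding short_path_point_def by blast
  qed
  then show False using m_min P by blast
qed

lemma subcode_induct:
  assumes "is_class C P" and "\<And>x. \<not> P x \<Longrightarrow> E x A"
    and step: "\<And>q. (\<And>q0. subcode E q0 q \<Longrightarrow> P q0) \<Longrightarrow> P q"
  shows "P q"
proof -
  obtain B where B: "\<forall>x. E x B \<longleftrightarrow> \<not> P x"
    using bounded_class_is_set[OF is_class_Not[OF assms(1)]] assms(2) by blast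
  have "\<exists>q0. E q0 B \<and> subcode E q0 q" if "E q B" for q using B step that by blast
  then show ?thesis using subcodes_wellfounded B by blast
qed

end

section \<open>Substitution of constants\<close>

definition subst_witness :: "('s \<Rightarrow> 's \<Rightarrow> bool) \<Rightarrow> 's \<Rightarrow> 's \<Rightarrow> 's \<Rightarrow> bool" where
  "subst_witness E i a F \<longleftrightarrow> (\<forall>p. E p F \<longrightarrow> subst_ok E i a F p)"

lemma is_subst_iff: "is_subst E x i a y \<longleftrightarrow> (\<exists>F. E (opair E x y) F \<and> subst_witness E i a F)"
  unfolding is_subst_def subst_witness_def by blast

lemma subst_ok_mono: "subst_ok E i a F p \<Longrightarrow> subset E F G \<Longrightarrow> subst_ok E i a G p"
  unfolding subst_ok_def subset_def by blast

lemma node_ok_cases: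
  assumes "node_ok E P S q"
  obtains (atom) t s where "P t" "P s" "q = FEq E t s \<or> q = FMem E t s"
  | (neg) p where "E p S" "q = FNeg E p"
  | (disj) p r where "E p S" "E r S" "q = FDisj E p r"
  | (ex) j p where "is_nat E j" "E p S" "q = FEx E j p"
  using assms unfolding node_ok_def by blast

lemma depth_ok_mono: "depth_ok E F p \<Longrightarrow> subset E F G \<Longrightarrow> depth_ok E G p"
  unfolding depth_ok_def subset_def by (elim disjE exE conjE; blast)

lemma free_ok_mono: "free_ok E F p \<Longrightarrow> subset E F G \<Longrightarrow> free_ok E G p"
  unfolding free_ok_def subset_def by (elim disjE exE conjE; blast)

text \<open>Environment layout for \<open>PSubstOk\<close>: \<open>10\<close> holds the witness set, \<open>11\<close> the constant \<open>Const a\<close>,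
  \<open>12\<close> the variable \<open>Var i\<close>, \<open>13\<close> the index \<open>i\<close>, \<open>14\<close>--\<open>18\<close> the tags \<open>num 2\<close>--\<open>num 6\<close> of the
  codes \<open>FEq\<close>, \<open>FMem\<close>, \<open>FNeg\<close>, \<open>FDisj\<close>, \<open>FEx\<close>, and \<open>20\<close> the pair to be checked.\<close>
definition PSubstTerm :: "nat \<Rightarrow> nat \<Rightarrow> pfm" where
  "PSubstTerm x y = PDisj (PConj (PEq x 12) (PEq y 11)) (PConj (PNeg (PEq x 12)) (PEq y x))"

definition PTagged :: "nat \<Rightarrow> nat \<Rightarrow> nat \<Rightarrow> nat \<Rightarrow> nat \<Rightarrow> pfm" where
  "PTagged n u tag x y = PEx n (PConj (PPair n x y) (PPair u tag n))"

definition PSubstOk :: pfm where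
  "PSubstOk = PEx 21 (PEx 22 (PConj (PPair 20 21 22) (PDisjs
    [PEx 23 (PEx 24 (PEx 25 (PEx 26 (PConj (PTagged 27 21 14 23 24) (PConj (PTagged 27 22 14 25 26)
       (PConj (PSubstTerm 23 25) (PSubstTerm 24 26))))))),
     PEx 23 (PEx 24 (PEx 25 (PEx 26 (PConj (PTagged 27 21 15 23 24) (PConj (PTagged 27 22 15 25 26)
       (PConj (PSubstTerm 23 25) (PSubstTerm 24 26))))))),
     PEx 23 (PEx 24 (PConj (PPair 21 16 23) (PConj (PPair 22 16 24) (PPairMem 25 23 24 10)))),
     PEx 23 (PEx 24 (PEx 25 (PEx 26 (PConj (PTagged 27 21 17 23 24) (PConj (PTagged 27 22 17 25 26)
       (PConj (PPairMem 27 23 25 10) (PPairMem 27 24 26 10))))))),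
     PEx 23 (PConj (PTagged 24 21 18 13 23) (PEq 22 21)),
     PEx 23 (PEx 24 (PEx 25 (PConj (PNeg (PEq 23 13)) (PConj (PTagged 26 21 18 23 24)
       (PConj (PTagged 26 22 18 23 25) (PPairMem 26 24 25 10))))))])))"

definition PSubstWitness :: pfm where
  "PSubstWitness = PAll 20 (PImp (PMem 20 10) PSubstOk)"

context gb_model
begin

lemma node_ok_code [simp]:
  "node_ok E P S (FEq E t s) \<longleftrightarrow> P t \<and> P s"
  "node_ok E P S (FMem E t s) \<longleftrightarrow> P t \<and> P s"
  "node_ok E P S (FNeg E p) \<longleftrightarrow> E p S"
  "node_ok E P S (FDisj E p q) \<longleftrightarrow> E p S \<and> E q S"
  "node_ok E P S (FEx E j p) \<longleftrightarrow> is_nat E j \<and> E p S"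
  unfolding node_ok_def by auto

lemma node_ok_mono: "node_ok E P S y \<Longrightarrow> subset E S S' \<Longrightarrow> node_ok E P S' y"
  unfolding subset_def by (erule node_ok_cases) auto

lemma subst_term_Var [simp]: "subst_term E i a (Var E j) = (if j = i then Const E a else Var E j)"
  by (simp add: subst_term_def)

lemma subst_term_Const [simp]: "subst_term E i a (Const E b) = Const E b"
  by (simp add: subst_term_def)

lemma subst_ok_cases:
  assumes "subst_ok E i a F (opair E q y)"
  obtains (eq) t s where "q = FEq E t s" "y = FEq E (subst_term E i a t) (subst_term E i a s)"
  | (mem) t s where "q = FMem E t s" "y = FMem E (subst_term E i a t) (subst_term E i a s)"
  | (neg) q0 y0 where "q = FNeg E q0" "y = FNeg E y0" "E (opair E q0 y0) F"
  | (disj) q0 r0 y0 z0 where "q = FDisj E q0 r0" "y = FDisj E y0 z0"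
      "E (opair E q0 y0) F" "E (opair E r0 z0) F"
  | (ex_bound) q0 where "q = FEx E i q0" "y = q"
  | (ex) j q0 y0 where "j \<noteq> i" "q = FEx E j q0" "y = FEx E j y0" "E (opair E q0 y0) F"
  using assms unfolding subst_ok_def opair_inj by blast

lemma subst_ok_code [simp]:
  "subst_ok E i a F (opair E (FEq E t s) y) \<longleftrightarrow> y = FEq E (subst_term E i a t) (subst_term E i a s)"
  "subst_ok E i a F (opair E (FMem E t s) y) \<longleftrightarrow> y = FMem E (subst_term E i a t) (subst_term E i a s)"
  "subst_ok E i a F (opair E (FNeg E q) y) \<longleftrightarrow> (\<exists>y0. y = FNeg E y0 \<and> E (opair E q y0) F)"
  "subst_ok E i a F (opair E (FDisj E q r) y) \<longleftrightarrow>
     (\<exists>y0 z0. y = FDisj E y0 z0 \<and> E (opair E q y0) F \<and> E (opair E r z0) F)"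
  "subst_ok E i a F (opair E (FEx E j q) y) \<longleftrightarrow>
     (j = i \<and> y = FEx E j q) \<or> (j \<noteq> i \<and> (\<exists>y0. y = FEx E j y0 \<and> E (opair E q y0) F))"
  by (auto simp: subst_ok_def)

lemma subst_witness_unique:
  assumes F: "subst_witness E i a F" and G: "subst_witness E i a G"
    and "E (opair E q y1) F" "E (opair E q y2) G"
  shows "y1 = y2"
proof -
  let ?P = "\<lambda>q. \<forall>y1 y2. E (opair E q y1) F \<longrightarrow> E (opair E q y2) G \<longrightarrow> y1 = y2"
  have "?P q"
  proof (rule subcode_induct[of ?P "big_union (big_union F)"])
    show "is_class C ?P"
      by (rule is_classI[of _ "(\<lambda>_. undefined)(1 := F, 2 := G)" "\<lambda>_. undefined"
            "PAll 3 (PAll 4 (PImp (PPairMem 5 0 3 1) (PImp (PPairMem 5 0 4 2) (PEq 3 4))))"]) simp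
    show "E x (big_union (big_union F))" if "\<not> ?P x" for x
      using that opair_components_mem by blast
  next
    fix q assume IH: "\<And>q0. subcode E q0 q \<Longrightarrow> ?P q0"
    show "?P q"
    proof (intro allI impI)
      fix y1 y2 assume y1: "E (opair E q y1) F" and y2: "E (opair E q y2) G"
      have ok2: "subst_ok E i a G (opair E q y2)" using G y2 unfolding subst_witness_def by blast
      from F y1 have "subst_ok E i a F (opair E q y1)" unfolding subst_witness_def by blast
      then show "y1 = y2"
      proof (cases rule: subst_ok_cases)
        case (neg q0 y0) then show ?thesis using ok2 IH[of q0] by auto
      next
        case (disj q0 r0 y0 z0) then show ?thesis using ok2 IH[of q0] IH[of r0] by auto
      next
        case (ex j q0 y0) then show ?thesis using ok2 IH[of q0] by auto
      qed (use ok2 in auto)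
    qed
  qed
  then show ?thesis using assms(3,4) by blast
qed

lemma is_subst_unique: "is_subst E q i a y1 \<Longrightarrow> is_subst E q i a y2 \<Longrightarrow> y1 = y2"
  unfolding is_subst_iff using subst_witness_unique by blast

lemma is_substI:
  assumes F: "subst_witness E i a F" and ok: "subst_ok E i a F (opair E q y)"
  shows "is_subst E q i a y"
proof -
  let ?G = "union2 E F (sing (opair E q y))"
  have "subset E F ?G" unfolding subset_def by simp
  then have "subst_witness E i a ?G"
    using F ok unfolding subst_witness_def by (auto intro: subst_ok_mono)
  then show ?thesis unfolding is_subst_iff by (intro exI[of _ ?G]) simp
qed

lemma subst_witness_emp: "subst_witness E i a (emp E)"
  by (simp add: subst_witness_def)

lemma subst_witness_union2:
  "subst_witness E i a F \<Longrightarrow> subst_witness E i a G \<Longrightarrow> subst_witness E i a (union2 E F G)"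
  unfolding subst_witness_def using subst_ok_mono unfolding subset_def by (metis union2_mem)

lemma is_subst_atomic:
  "is_subst E (FEq E t s) i a (FEq E (subst_term E i a t) (subst_term E i a s))"
  "is_subst E (FMem E t s) i a (FMem E (subst_term E i a t) (subst_term E i a s))"
  by (auto intro: is_substI[OF subst_witness_emp])

lemma is_subst_FEx_bound: "is_subst E (FEx E i q) i a (FEx E i q)"
  by (auto intro: is_substI[OF subst_witness_emp])

lemma is_subst_FNeg: "is_subst E q i a y \<Longrightarrow> is_subst E (FNeg E q) i a (FNeg E y)"
  unfolding is_subst_iff[of _ q] by (auto intro: is_substI)

lemma is_subst_FEx: "j \<noteq> i \<Longrightarrow> is_subst E q i a y \<Longrightarrow> is_subst E (FEx E j q) i a (FEx E j y)"
  unfolding is_subst_iff[of _ q] by (auto intro: is_substI)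

lemma is_subst_FDisj:
  assumes "is_subst E q i a y" "is_subst E r i a z"
  shows "is_subst E (FDisj E q r) i a (FDisj E y z)"
proof -
  obtain F G where "E (opair E q y) F" "subst_witness E i a F" "E (opair E r z) G" "subst_witness E i a G"
    using assms unfolding is_subst_iff by blast
  then show ?thesis
    by (intro is_substI[of _ _ "union2 E F G"]) (auto intro: subst_witness_union2)
qed

lemma psat_PTagged [simp]:
  "n \<noteq> u \<Longrightarrow> n \<noteq> tag \<Longrightarrow> n \<noteq> x \<Longrightarrow> n \<noteq> y \<Longrightarrow>
    psat E C s c (PTagged n u tag x y) \<longleftrightarrow> s u = opair E (s tag) (opair E (s x) (s y))"
  unfolding PTagged_def by auto

lemma psat_PSubstTerm:
  "s 11 = Const E a \<Longrightarrow> s 12 = Var E i \<Longrightarrow>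
    psat E C s c (PSubstTerm x y) \<longleftrightarrow> s y = subst_term E i a (s x)"
  unfolding PSubstTerm_def subst_term_def by auto

lemma psat_PSubstWitness:
  assumes env: "s 10 = F" "s 11 = Const E a" "s 12 = Var E i" "s 13 = i"
    "s 14 = num E 2" "s 15 = num E 3" "s 16 = num E 4" "s 17 = num E 5" "s 18 = num E 6"
  shows "psat E C s c PSubstWitness \<longleftrightarrow> subst_witness E i a F"
proof -
  have subst_term_iff: "psat E C s' c (PSubstTerm x y) \<longleftrightarrow> s' y = subst_term E i a (s' x)"
    if "\<forall>k \<in> {11, 12}. s' k = s k" for s' x y
    using that env psat_PSubstTerm by auto
  have "psat E C (s(20 := p)) c PSubstOk \<longleftrightarrow> subst_ok E i a F p" for p
    unfolding PSubstOk_def subst_ok_def using env by (simp add: subst_term_iff code_defs del: num.simps) blast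
  then show ?thesis unfolding PSubstWitness_def subst_witness_def using env(1) by simp
qed

lemma is_class_subst_graph:
  "is_class C (\<lambda>w. \<exists>a q y. w = opair E a (opair E q y) \<and> is_subst E q i a y)"
proof -
  define s :: "nat \<Rightarrow> 's" where "s = (\<lambda>_. undefined)(12 := Var E i, 13 := i,
     14 := num E 2, 15 := num E 3, 16 := num E 4, 17 := num E 5, 18 := num E 6, 19 := num E 1)"
  define \<phi> where "\<phi> = PEx 1 (PEx 2 (PConj (PPair 0 1 2) (PEx 3 (PEx 4 (PConj (PPair 2 3 4)
    (PEx 11 (PConj (PPair 11 19 1) (PEx 10 (PConj (PMem 2 10) PSubstWitness)))))))))"
  have "psat E C (s(0 := w)) c \<phi> \<longleftrightarrow> (\<exists>a t. w = opair E a t \<and> (\<exists>q y. t = opair E q y \<and>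
      (\<exists>F. E t F \<and> psat E C (s(0 := w, 1 := a, 2 := t, 3 := q, 4 := y, 11 := Const E a, 10 := F))
        c PSubstWitness)))" for w
    unfolding \<phi>_def s_def Const_def by (simp del: num.simps)
  also have "\<dots> w \<longleftrightarrow> (\<exists>a q y. w = opair E a (opair E q y) \<and> is_subst E q i a y)" for w
  proof -
    have "psat E C (s(0 := w, 1 := a, 2 := t, 3 := q, 4 := y, 11 := Const E a, 10 := F)) c
        PSubstWitness \<longleftrightarrow> subst_witness E i a F" for a t q y F
      by (rule psat_PSubstWitness) (simp_all add: s_def)
    then show ?thesis unfolding is_subst_iff by auto
  qed
  finally show ?thesis by (intro is_classI[of _ s c \<phi>]) simp
qed

lemma is_subst_exists:
  assumes "formula_gen E P q"
  shows "\<exists>y. is_subst E q i a y"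
proof -
  obtain S where "E q S" and S: "\<forall>w. E w S \<longrightarrow> node_ok E P S w"
    using assms unfolding formula_gen_def by blast
  obtain X where X: "\<forall>w. C w X \<longleftrightarrow> (\<exists>a q y. w = opair E a (opair E q y) \<and> is_subst E q i a y)"
    using is_class_subst_graph unfolding is_class_def by blast
  let ?P = "\<lambda>q. E q S \<longrightarrow> (\<exists>y. is_subst E q i a y)"
  have "?P q"
  proof (rule subcode_induct[of ?P S])
    show "is_class C ?P"
      by (rule is_classI[of _ "(\<lambda>_. undefined)(1 := S, 2 := a)" "\<lambda>_. X"
            "PImp (PMem 0 1) (PEx 3 (PEx 4 (PConj (PPair 4 0 3) (PEx 5 (PConj (PPair 5 2 4) (PIn 5 0))))))"])
        (simp add: X)
  next
    fix q assume IH: "\<And>q0. subcode E q0 q \<Longrightarrow> ?P q0"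
    show "?P q"
    proof
      assume "E q S"
      with S have "node_ok E P S q" by blast
      then show "\<exists>y. is_subst E q i a y"
      proof (cases rule: node_ok_cases)
        case atom then show ?thesis using is_subst_atomic by blast
      next
        case (neg p)
        then obtain y where "is_subst E p i a y" using IH[of p] by auto
        then show ?thesis using neg is_subst_FNeg by blast
      next
        case (disj p r)
        then obtain y z where "is_subst E p i a y" "is_subst E r i a z" using IH[of p] IH[of r] by auto
        then show ?thesis using disj is_subst_FDisj by blast
      next
        case (ex j p)
        then obtain y where "is_subst E p i a y" using IH[of p] by auto
        then show ?thesis using ex is_subst_FEx is_subst_FEx_bound by (cases "j = i") blast+
      qed
    qed
  qed blast
  with \<open>E q S\<close> show ?thesis by blast
qed

definition subst :: "'s \<Rightarrow> 's \<Rightarrow> 's \<Rightarrow> 's" where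
  "subst q i a = (THE y. is_subst E q i a y)"

lemma subst_eqI: "is_subst E q i a y \<Longrightarrow> subst q i a = y"
  unfolding subst_def using is_subst_unique by blast

lemma is_subst_subst: "formula_gen E P q \<Longrightarrow> is_subst E q i a (subst q i a)"
  using is_subst_exists subst_eqI by metis

lemma is_subst_iff_eq: "is_formula E q \<Longrightarrow> is_subst E q i a y \<longleftrightarrow> y = subst q i a"
  using is_subst_subst subst_eqI unfolding is_formula_def by metis

lemma depth_ok_code [simp]:
  "depth_ok E F (opair E (FEq E t s) d) \<longleftrightarrow> d = emp E"
  "depth_ok E F (opair E (FMem E t s) d) \<longleftrightarrow> d = emp E"
  "depth_ok E F (opair E (FNeg E q) d) \<longleftrightarrow> (\<exists>d0. d = succ E d0 \<and> E (opair E q d0) F)"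
  "depth_ok E F (opair E (FDisj E q r) d) \<longleftrightarrow>
     (\<exists>d1 d2. d = succ E (union2 E d1 d2) \<and> E (opair E q d1) F \<and> E (opair E r d2) F)"
  "depth_ok E F (opair E (FEx E j q) d) \<longleftrightarrow> (\<exists>d0. d = succ E d0 \<and> E (opair E q d0) F)"
  unfolding depth_ok_def by simp_all

lemma free_ok_code [simp]:
  "free_ok E F (opair E (FEq E t s) B) \<longleftrightarrow> term_bound E B t \<and> term_bound E B s"
  "free_ok E F (opair E (FMem E t s) B) \<longleftrightarrow> term_bound E B t \<and> term_bound E B s"
  "free_ok E F (opair E (FNeg E q) B) \<longleftrightarrow> E (opair E q B) F"
  "free_ok E F (opair E (FDisj E q r) B) \<longleftrightarrow> E (opair E q B) F \<and> E (opair E r B) F"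
  "free_ok E F (opair E (FEx E j q) B) \<longleftrightarrow> E (opair E q (union2 E B (sing j))) F"
  unfolding free_ok_def sing_def by simp_all

lemma free_ok_cases:
  assumes "free_ok E F (opair E q B)"
  obtains (atom) t s where "q = FEq E t s \<or> q = FMem E t s" "term_bound E B t" "term_bound E B s"
  | (neg) q0 where "q = FNeg E q0" "E (opair E q0 B) F"
  | (disj) q0 r0 where "q = FDisj E q0 r0" "E (opair E q0 B) F" "E (opair E r0 B) F"
  | (ex) j q0 where "q = FEx E j q0" "E (opair E q0 (union2 E B (sing j))) F"
  using assms unfolding free_ok_def sing_def opair_inj by blast

lemma is_term_code [simp]: "is_term E (Var E j) \<longleftrightarrow> is_nat E j" "is_term E (Const E a)"
  unfolding is_term_def by simp_all

lemma is_term_subst_term: "is_term E t \<Longrightarrow> is_term E (subst_term E i a t)"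
  unfolding is_term_def subst_term_def by auto

lemma term_bound_subst_term: "term_bound E B t \<Longrightarrow> term_bound E (remove B i) (subst_term E i a t)"
  unfolding term_bound_def subst_term_def by auto

lemma subst_term_commute:
  "i \<noteq> j \<Longrightarrow> subst_term E j b (subst_term E i a t) = subst_term E i a (subst_term E j b t)"
  unfolding subst_term_def by auto

lemma union2_remove_sing: "union2 E (remove B i) (sing i) = union2 E B (sing i)"
  by (rule extensionality) auto

lemma remove_union2_sing: "j \<noteq> i \<Longrightarrow> remove (union2 E B (sing j)) i = union2 E (remove B i) (sing j)"
  by (rule extensionality) auto

text \<open>Each preservation property is proved by transporting a witness set along a substitution
  witness \<open>F\<close>: the new witness adds to the old one its image under \<open>F\<close>, a set by separation.\<close>
lemma formula_gen_is_subst: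
  assumes "formula_gen E (is_term E) q" and "is_subst E q i a y"
  shows "formula_gen E (is_term E) y"
proof -
  obtain S where "E q S" and S: "\<forall>w. E w S \<longrightarrow> node_ok E (is_term E) S w"
    using assms(1) unfolding formula_gen_def by blast
  obtain F where "E (opair E q y) F" and F: "subst_witness E i a F"
    using assms(2) unfolding is_subst_iff by blast
  obtain Y where Y: "\<forall>w. E w Y \<longleftrightarrow> (\<exists>q. E q S \<and> E (opair E q w) F)" using image_set by blast
  define S' where "S' = union2 E S Y"
  have "subset E S S'" unfolding subset_def S'_def by simp
  have "node_ok E (is_term E) S' w" if wS': "E w S'" for w
  proof (cases "E w S")
    case True then show ?thesis using S by (intro node_ok_mono[OF _ \<open>subset E S S'\<close>]) blast
  next
    case False
    then obtain q' where "E q' S" and "E (opair E q' w) F" using wS' Y unfolding S'_def by auto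
    with S F have node: "node_ok E (is_term E) S q'" and "subst_ok E i a F (opair E q' w)"
      unfolding subst_witness_def by auto
    from this(2) show ?thesis
      by (cases rule: subst_ok_cases) (use node Y in \<open>auto simp: S'_def is_term_subst_term\<close>)
  qed
  moreover have "E y S'" using Y \<open>E q S\<close> \<open>E (opair E q y) F\<close> unfolding S'_def by auto
  ultimately show ?thesis unfolding formula_gen_def by blast
qed

lemma has_depth_is_subst:
  assumes "has_depth E q d" and "is_subst E q i a y"
  shows "has_depth E y d"
proof -
  obtain D where "E (opair E q d) D" and D: "\<forall>p. E p D \<longrightarrow> depth_ok E D p"
    using assms(1) unfolding has_depth_def by blast
  obtain F where "E (opair E q y) F" and F: "subst_witness E i a F"
    using assms(2) unfolding is_subst_iff by blast
  obtain Z where "\<forall>w. E w Z \<longleftrightarrow> (\<exists>q' y' d'. w = opair E y' d' \<and> E (opair E q' y') F \<and> E (opair E q' d') D)"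
    using converse_relcomp_set by blast
  then have Z: "E w Z \<longleftrightarrow> (\<exists>y' q' d'. w = opair E y' d' \<and> E (opair E q' y') F \<and> E (opair E q' d') D)" for w
    by blast
  define D' where "D' = union2 E D Z"
  have "subset E D D'" unfolding subset_def D'_def by simp
  have "depth_ok E D' w" if wD': "E w D'" for w
  proof (cases "E w D")
    case True then show ?thesis using D by (intro depth_ok_mono[OF _ \<open>subset E D D'\<close>]) blast
  next
    case False
    then obtain y' q' d' where w: "w = opair E y' d'" and "E (opair E q' y') F"
      and qd: "E (opair E q' d') D" using wD' Z unfolding D'_def by auto
    with F D have "subst_ok E i a F (opair E q' y')" and depth: "depth_ok E D (opair E q' d')"
      unfolding subst_witness_def by auto
    from this(1) show ?thesis
      by (cases rule: subst_ok_cases) (use w qd depth False in \<open>auto simp: D'_def Z\<close>)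
  qed
  moreover have "E (opair E y d) D'" using Z \<open>E (opair E q d) D\<close> \<open>E (opair E q y) F\<close> unfolding D'_def by auto
  moreover have "is_formula E y"
    using assms formula_gen_is_subst unfolding has_depth_def is_formula_def by blast
  ultimately show ?thesis unfolding has_depth_def by blast
qed

lemma free_within_is_subst:
  assumes "free_within E q B" and "is_subst E q i a y"
  shows "free_within E y (remove B i)"
proof -
  obtain V where "E (opair E q B) V" and V: "\<forall>p. E p V \<longrightarrow> free_ok E V p"
    using assms(1) unfolding free_within_def by blast
  obtain F where "E (opair E q y) F" and F: "subst_witness E i a F"
    using assms(2) unfolding is_subst_iff by blast
  obtain R where "\<forall>w. E w R \<longleftrightarrow> (\<exists>a b c. w = opair E b c \<and> E (opair E a b) F \<and> E (opair E a c) V)"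
    using converse_relcomp_set by blast
  moreover obtain Z where "\<forall>w. E w Z \<longleftrightarrow> (\<exists>x B. w = opair E x (remove B i) \<and> E (opair E x B) R)"
    using remove_snd_set by blast
  ultimately have Z: "E w Z \<longleftrightarrow> (\<exists>y' q' B'. w = opair E y' (remove B' i) \<and>
      E (opair E q' y') F \<and> E (opair E q' B') V)" for w
    by auto
  define V' where "V' = union2 E V Z"
  have "subset E V V'" unfolding subset_def V'_def by simp
  have "free_ok E V' w" if wV': "E w V'" for w
  proof (cases "E w V")
    case True then show ?thesis using V by (intro free_ok_mono[OF _ \<open>subset E V V'\<close>]) blast
  next
    case False
    then obtain y' q' B' where w: "w = opair E y' (remove B' i)" and "E (opair E q' y') F"
      and qB: "E (opair E q' B') V" using wV' Z unfolding V'_def by auto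
    with F V have "subst_ok E i a F (opair E q' y')" and free: "free_ok E V (opair E q' B')"
      unfolding subst_witness_def by auto
    from this(1) show ?thesis
    proof (cases rule: subst_ok_cases)
      case (ex_bound q0)
      then show ?thesis using w free by (simp add: V'_def union2_remove_sing)
    next
      case (ex j q0 y0)
      then show ?thesis using w free by (auto simp: V'_def Z remove_union2_sing[symmetric])
    qed (use w free in \<open>auto simp: V'_def Z term_bound_subst_term\<close>)
  qed
  moreover have "E (opair E y (remove B i)) V'"
    using Z \<open>E (opair E q B) V\<close> \<open>E (opair E q y) F\<close> unfolding V'_def by auto
  ultimately show ?thesis unfolding free_within_def by blast
qed

lemma is_subst_vacuous:
  assumes "free_within E q B" and "\<not> E i B"
  shows "is_subst E q i a q"
proof -
  obtain V where "E (opair E q B) V" and V: "\<forall>p. E p V \<longrightarrow> free_ok E V p"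
    using assms(1) unfolding free_within_def by blast
  obtain Z where Z: "\<forall>w. E w Z \<longleftrightarrow> (\<exists>q' B'. w = opair E q' q' \<and> \<not> E i B' \<and> E (opair E q' B') V)"
  proof (rule pair_class_is_set[of _ "big_union (big_union V)" "big_union (big_union V)", THEN exE])
    show "is_class C (\<lambda>w. \<exists>q' B'. w = opair E q' q' \<and> \<not> E i B' \<and> E (opair E q' B') V)"
      by (rule is_classI[of _ "(\<lambda>_. undefined)(1 := V, 2 := i)" "\<lambda>_. undefined"
            "PEx 3 (PEx 4 (PConj (PPair 0 3 3) (PConj (PNeg (PMem 2 4)) (PPairMem 5 3 4 1))))"]) simp
  qed (use opair_components_mem in blast)+
  have "subst_ok E i a Z w" if "E w Z" for w
  proof -
    obtain q' B' where w: "w = opair E q' q'" and "\<not> E i B'" and "E (opair E q' B') V"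
      using \<open>E w Z\<close> Z by blast
    with V have "free_ok E V (opair E q' B')" by blast
    then show ?thesis
    proof (cases rule: free_ok_cases)
      case (atom t s)
      then have "subst_term E i a t = t" "subst_term E i a s = s"
        using \<open>\<not> E i B'\<close> unfolding term_bound_def subst_term_def by auto
      then show ?thesis using atom(1) w by auto
    next
      case (ex j q0)
      moreover have "E (opair E q0 q0) Z" if "j \<noteq> i"
        using ex Z \<open>\<not> E i B'\<close> that by (auto intro!: exI[of _ "union2 E B' (sing j)"])
      ultimately show ?thesis using w by (cases "j = i") auto
    qed (use w Z \<open>\<not> E i B'\<close> in auto)
  qed
  moreover have "E (opair E q q) Z" using Z \<open>E (opair E q B) V\<close> assms(2) by blast
  ultimately show ?thesis unfolding is_subst_iff subst_witness_def by blast
qed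

lemma subst_witness_commute:
  assumes "i \<noteq> j" and F1: "subst_witness E i a F1" and F2: "subst_witness E j b F2"
    and G: "subst_witness E j b G"
    and "E (opair E q y1) F1" "E (opair E y1 y2) F2" "E (opair E q z) G"
  shows "is_subst E z i a y2"
proof -
  obtain F where "\<forall>w. E w F \<longleftrightarrow> (\<exists>a b c. w = opair E a c \<and> E (opair E a b) F1 \<and> E (opair E b c) F2)"
    using relcomp_set by blast
  moreover obtain Z where "\<forall>w. E w Z \<longleftrightarrow> (\<exists>a b c. w = opair E b c \<and> E (opair E a b) G \<and> E (opair E a c) F)"
    using converse_relcomp_set by blast
  ultimately have Z: "E w Z \<longleftrightarrow> (\<exists>z' y2' q' y1'. w = opair E z' y2' \<and>
      E (opair E q' y1') F1 \<and> E (opair E y1' y2') F2 \<and> E (opair E q' z') G)" for w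
    by auto
  define H where "H = union2 E F1 Z"
  have "subset E F1 H" unfolding subset_def H_def by simp
  have "subst_ok E i a H w" if wH: "E w H" for w
  proof (cases "E w F1")
    case True then show ?thesis using F1 unfolding subst_witness_def
      by (intro subst_ok_mono[OF _ \<open>subset E F1 H\<close>]) blast
  next
    case False
    then obtain z' y2' q' y1' where w: "w = opair E z' y2'" and "E (opair E q' y1') F1"
      and y2': "E (opair E y1' y2') F2" and z': "E (opair E q' z') G"
      using wH Z unfolding H_def by auto
    with F1 F2 G have "subst_ok E i a F1 (opair E q' y1')" and ok2: "subst_ok E j b F2 (opair E y1' y2')"
      and ok3: "subst_ok E j b G (opair E q' z')"
      unfolding subst_witness_def by auto
    from this(1) show ?thesis
    proof (cases rule: subst_ok_cases)
      case (ex_bound q0)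
      then obtain u v where "y2' = FEx E i u" "E (opair E q0 u) F2" "z' = FEx E i v" "E (opair E q0 v) G"
        using ok2 ok3 \<open>i \<noteq> j\<close> by auto
      moreover from this have "u = v" using subst_witness_unique[OF F2 G] by blast
      ultimately show ?thesis using w by simp
    next
      case (ex k q0 y0)
      then show ?thesis using ok2 ok3 w \<open>subset E F1 H\<close>
        by (cases "k = j") (auto simp: H_def Z subset_def)
    qed (use ok2 ok3 w \<open>i \<noteq> j\<close> in \<open>auto simp: H_def Z subst_term_commute\<close>)
  qed
  moreover have "E (opair E z y2) H" using Z assms(5-7) unfolding H_def by auto
  ultimately show ?thesis unfolding is_subst_iff subst_witness_def by blast
qed

lemma formula_gen_node:
  assumes "formula_gen E P x"
  obtains S where "node_ok E P S x" "\<And>y. E y S \<Longrightarrow> formula_gen E P y"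
  using assms unfolding formula_gen_def by blast

lemma formula_gen_intro:
  assumes S: "\<And>y. E y S \<Longrightarrow> node_ok E P S y" and x: "node_ok E P S x"
  shows "formula_gen E P x"
proof -
  let ?S = "union2 E S (sing x)"
  have "subset E S ?S" unfolding subset_def by simp
  have "node_ok E P ?S y" if "E y ?S" for y
  proof (rule node_ok_mono[OF _ \<open>subset E S ?S\<close>])
    show "node_ok E P S y" using that S x by auto
  qed
  then show ?thesis unfolding formula_gen_def by (intro exI[of _ ?S]) simp
qed

lemma formula_gen_witness:
  assumes "formula_gen E P q"
  obtains S where "E q S" "\<forall>y. E y S \<longrightarrow> node_ok E P S y"
  using assms unfolding formula_gen_def by blast

lemma formula_gen_mono:
  assumes "formula_gen E P q" and PQ: "\<And>t. P t \<Longrightarrow> Q t"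
  shows "formula_gen E Q q"
proof -
  obtain S where "E q S" and S: "\<forall>y. E y S \<longrightarrow> node_ok E P S y"
    using assms(1) by (rule formula_gen_witness)
  have "node_ok E Q S y" if "E y S" for y
    using S that by (auto elim!: node_ok_cases simp: PQ)
  with \<open>E q S\<close> show ?thesis unfolding formula_gen_def by blast
qed

lemma is_formula_LZF: "is_LZF E \<phi> \<Longrightarrow> is_formula E \<phi>"
  unfolding is_LZF_def is_formula_def
  by (erule formula_gen_mono) (auto simp: is_var_term_def is_term_def)

lemma is_formula_atomic [simp]:
  "is_formula E (FEq E t s) \<longleftrightarrow> is_term E t \<and> is_term E s"
  "is_formula E (FMem E t s) \<longleftrightarrow> is_term E t \<and> is_term E s"
  unfolding is_formula_def by (auto elim: formula_gen_node intro: formula_gen_intro[of "emp E"])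

lemma is_formula_FNeg [simp]: "is_formula E (FNeg E q) \<longleftrightarrow> is_formula E q"
proof
  assume "is_formula E q"
  then obtain S where "E q S" "\<forall>y. E y S \<longrightarrow> node_ok E (is_term E) S y"
    unfolding is_formula_def by (rule formula_gen_witness)
  then show "is_formula E (FNeg E q)" unfolding is_formula_def by (intro formula_gen_intro[of S]) simp_all
qed (auto simp: is_formula_def elim: formula_gen_node)

lemma is_formula_FEx [simp]: "is_formula E (FEx E j q) \<longleftrightarrow> is_nat E j \<and> is_formula E q"
proof
  assume "is_nat E j \<and> is_formula E q"
  then obtain S where "E q S" "\<forall>y. E y S \<longrightarrow> node_ok E (is_term E) S y"
    unfolding is_formula_def by (meson formula_gen_witness)
  then show "is_formula E (FEx E j q)"
    using \<open>is_nat E j \<and> is_formula E q\<close> unfolding is_formula_def by (intro formula_gen_intro[of S]) simp_all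
qed (auto simp: is_formula_def elim: formula_gen_node)

lemma is_formula_FDisj [simp]: "is_formula E (FDisj E q r) \<longleftrightarrow> is_formula E q \<and> is_formula E r"
proof
  assume "is_formula E q \<and> is_formula E r"
  then obtain S1 S2 where "E q S1" "\<forall>y. E y S1 \<longrightarrow> node_ok E (is_term E) S1 y"
    and "E r S2" "\<forall>y. E y S2 \<longrightarrow> node_ok E (is_term E) S2 y"
    unfolding is_formula_def by (meson formula_gen_witness)
  moreover have "subset E S1 (union2 E S1 S2)" "subset E S2 (union2 E S1 S2)"
    unfolding subset_def by simp_all
  ultimately show "is_formula E (FDisj E q r)" unfolding is_formula_def
    by (intro formula_gen_intro[of "union2 E S1 S2"]) (auto intro: node_ok_mono)
qed (auto simp: is_formula_def elim: formula_gen_node)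

lemma is_formula_derived [simp]:
  "is_formula E (FAnd E p q) \<longleftrightarrow> is_formula E p \<and> is_formula E q"
  "is_formula E (FImp E p q) \<longleftrightarrow> is_formula E p \<and> is_formula E q"
  "is_formula E (FIff E p q) \<longleftrightarrow> is_formula E p \<and> is_formula E q"
  "is_formula E (FAll E j p) \<longleftrightarrow> is_nat E j \<and> is_formula E p"
  by (auto simp: FAnd_def FImp_def FIff_def FAll_def)

lemma is_formula_subst [simp]: "is_formula E q \<Longrightarrow> is_formula E (subst q i a)"
  using formula_gen_is_subst is_subst_subst unfolding is_formula_def by blast

lemma subst_code [simp]:
  "subst (FEq E t s) i a = FEq E (subst_term E i a t) (subst_term E i a s)"
  "subst (FMem E t s) i a = FMem E (subst_term E i a t) (subst_term E i a s)"
  "subst (FEx E i q) i a = FEx E i q"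
  "is_formula E q \<Longrightarrow> subst (FNeg E q) i a = FNeg E (subst q i a)"
  "is_formula E q \<Longrightarrow> is_formula E r \<Longrightarrow> subst (FDisj E q r) i a = FDisj E (subst q i a) (subst r i a)"
  "j \<noteq> i \<Longrightarrow> is_formula E q \<Longrightarrow> subst (FEx E j q) i a = FEx E j (subst q i a)"
  using is_subst_subst[of "is_term E" q i a] is_subst_subst[of "is_term E" r i a]
  by (auto intro!: subst_eqI is_subst_atomic is_subst_FEx_bound is_subst_FNeg is_subst_FDisj is_subst_FEx
      simp: is_formula_def)

lemma subst_derived [simp]:
  "is_formula E p \<Longrightarrow> is_formula E q \<Longrightarrow> subst (FAnd E p q) i a = FAnd E (subst p i a) (subst q i a)"
  "is_formula E p \<Longrightarrow> is_formula E q \<Longrightarrow> subst (FImp E p q) i a = FImp E (subst p i a) (subst q i a)"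
  "is_formula E p \<Longrightarrow> is_formula E q \<Longrightarrow> subst (FIff E p q) i a = FIff E (subst p i a) (subst q i a)"
  "subst (FAll E i q) i a = FAll E i q"
  "j \<noteq> i \<Longrightarrow> is_nat E j \<Longrightarrow> is_formula E q \<Longrightarrow> subst (FAll E j q) i a = FAll E j (subst q i a)"
  by (simp_all add: FAnd_def FImp_def FIff_def FAll_def subst_eqI is_subst_FNeg is_subst_FEx_bound)

lemma subst_vacuous: "free_within E q B \<Longrightarrow> \<not> E i B \<Longrightarrow> subst q i a = q"
  using is_subst_vacuous subst_eqI by blast

lemma free_within_subst:
  "free_within E q B \<Longrightarrow> is_formula E q \<Longrightarrow> free_within E (subst q i a) (remove B i)"
  using free_within_is_subst is_subst_subst unfolding is_formula_def by blast

lemma has_depth_subst: "has_depth E q d \<Longrightarrow> has_depth E (subst q i a) d"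
  using has_depth_is_subst is_subst_subst unfolding has_depth_def is_formula_def by blast

lemma subst_commute:
  assumes "i \<noteq> j" and "is_formula E q"
  shows "subst (subst q i a) j b = subst (subst q j b) i a"
proof -
  have "formula_gen E (is_term E) q" "formula_gen E (is_term E) (subst q i a)"
    using assms(2) unfolding is_formula_def[symmetric] by simp_all
  then have "is_subst E q i a (subst q i a)" "is_subst E (subst q i a) j b (subst (subst q i a) j b)"
    "is_subst E q j b (subst q j b)"
    by (auto intro: is_subst_subst)
  then obtain F1 F2 G where "subst_witness E i a F1" "subst_witness E j b F2" "subst_witness E j b G"
    "E (opair E q (subst q i a)) F1" "E (opair E (subst q i a) (subst (subst q i a) j b)) F2"
    "E (opair E q (subst q j b)) G"
    unfolding is_subst_iff by blast
  then have "is_subst E (subst q j b) i a (subst (subst q i a) j b)"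
    using subst_witness_commute[OF assms(1)] by blast
  then show ?thesis by (simp add: subst_eqI)
qed

lemma has_depth_compound:
  "has_depth E (FNeg E q) d \<Longrightarrow> \<exists>d0. d = succ E d0 \<and> has_depth E q d0"
  "has_depth E (FDisj E q r) d \<Longrightarrow>
    \<exists>d1 d2. d = succ E (union2 E d1 d2) \<and> has_depth E q d1 \<and> has_depth E r d2"
  "has_depth E (FEx E j q) d \<Longrightarrow> \<exists>d0. d = succ E d0 \<and> has_depth E q d0"
  unfolding has_depth_def by (auto, (metis depth_ok_code)+)

lemma free_within_compound:
  "free_within E (FNeg E q) B \<Longrightarrow> free_within E q B"
  "free_within E (FDisj E q r) B \<Longrightarrow> free_within E q B \<and> free_within E r B"
  "free_within E (FEx E j q) B \<Longrightarrow> free_within E q (union2 E B (sing j))"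
  unfolding free_within_def by (metis free_ok_code)+

lemma free_within_intro:
  assumes V: "\<forall>p. E p V \<longrightarrow> free_ok E V p" and "free_ok E V (opair E x B)"
  shows "free_within E x B"
proof -
  let ?V = "union2 E V (sing (opair E x B))"
  have "subset E V ?V" unfolding subset_def by simp
  have "free_ok E ?V p" if "E p ?V" for p
  proof (rule free_ok_mono[OF _ \<open>subset E V ?V\<close>])
    show "free_ok E V p" using that assms by auto
  qed
  then show ?thesis unfolding free_within_def by (intro exI[of _ ?V]) simp
qed

lemma term_bound_VarI: "E j B \<Longrightarrow> term_bound E B (Var E j)"
  unfolding term_bound_def by blast

lemma free_within_atomicI:
  "term_bound E B t \<Longrightarrow> term_bound E B s \<Longrightarrow> free_within E (FEq E t s) B"
  "term_bound E B t \<Longrightarrow> term_bound E B s \<Longrightarrow> free_within E (FMem E t s) B"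
  by (auto intro: free_within_intro[of "emp E"])

lemma free_within_FNegI: "free_within E q B \<Longrightarrow> free_within E (FNeg E q) B"
  unfolding free_within_def[of _ q] by (auto intro: free_within_intro)

lemma free_within_FExI: "free_within E q (union2 E B (sing j)) \<Longrightarrow> free_within E (FEx E j q) B"
  unfolding free_within_def[of _ q] by (auto intro: free_within_intro)

lemma free_within_FDisjI:
  assumes "free_within E q B" "free_within E r B"
  shows "free_within E (FDisj E q r) B"
proof -
  obtain V W where "E (opair E q B) V" "\<forall>p. E p V \<longrightarrow> free_ok E V p"
    and "E (opair E r B) W" "\<forall>p. E p W \<longrightarrow> free_ok E W p"
    using assms unfolding free_within_def by blast
  moreover have "subset E V (union2 E V W)" "subset E W (union2 E V W)"
    unfolding subset_def by simp_all
  ultimately show ?thesis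
    by (intro free_within_intro[of "union2 E V W"]) (auto intro: free_ok_mono)
qed

lemma free_within_derivedI:
  "free_within E p B \<Longrightarrow> free_within E q B \<Longrightarrow> free_within E (FAnd E p q) B"
  "free_within E p B \<Longrightarrow> free_within E q B \<Longrightarrow> free_within E (FImp E p q) B"
  "free_within E p B \<Longrightarrow> free_within E q B \<Longrightarrow> free_within E (FIff E p q) B"
  "free_within E q (union2 E B (sing j)) \<Longrightarrow> free_within E (FAll E j q) B"
  unfolding FAnd_def FImp_def FIff_def FAll_def
  by (blast intro: free_within_FNegI free_within_FDisjI free_within_FExI)+

lemma free_within_mono:
  assumes "free_within E q B" and "subset E B B'"
  shows "free_within E q B'"
proof -
  obtain V where "E (opair E q B) V" and V: "\<forall>p. E p V \<longrightarrow> free_ok E V p"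
    using assms(1) unfolding free_within_def by blast
  obtain Z where Z: "\<forall>w. E w Z \<longleftrightarrow> (\<exists>x B. w = opair E x (union2 E B B') \<and> E (opair E x B) V)"
    using union_snd_set by blast
  have swap: "union2 E (union2 E B (sing j)) B' = union2 E (union2 E B B') (sing j)" for B j
    by (rule extensionality) auto
  have "free_ok E Z w" if "E w Z" for w
  proof -
    obtain x D where w: "w = opair E x (union2 E D B')" and "E (opair E x D) V"
      using \<open>E w Z\<close> Z by blast
    with V have "free_ok E V (opair E x D)" by blast
    then show ?thesis
    proof (cases rule: free_ok_cases)
      case (ex j q0)
      then show ?thesis using w Z by (auto simp: swap[symmetric])
    qed (use w Z in \<open>auto simp: term_bound_def\<close>)
  qed
  moreover have "union2 E B B' = B'" using assms(2) unfolding subset_def by (intro extensionality) auto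
  then have "E (opair E q B') Z" using Z \<open>E (opair E q B) V\<close> by metis
  ultimately show ?thesis unfolding free_within_def by blast
qed

lemma in_Depth_descend:
  assumes "in_Depth E k x" and "is_formula E x \<Longrightarrow> is_formula E q"
    and "free_within E x (emp E) \<Longrightarrow> free_within E q (emp E)"
    and "\<And>d. has_depth E x d \<Longrightarrow> \<exists>d0. has_depth E q d0 \<and> subset E d0 d"
  shows "in_Depth E k q"
proof -
  obtain d where "has_depth E x d" "subset E d k" using assms(1) unfolding in_Depth_def by blast
  moreover from this(1) obtain d0 where "has_depth E q d0" "subset E d0 d" using assms(4) by blast
  ultimately show ?thesis using assms(1-3) unfolding in_Depth_def is_sentence_def subset_def by blast
qed

lemma in_Depth_FNegD: "in_Depth E k (FNeg E q) \<Longrightarrow> in_Depth E k q"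
proof (erule in_Depth_descend)
  fix d assume "has_depth E (FNeg E q) d"
  then obtain d0 where "d = succ E d0" "has_depth E q d0" using has_depth_compound(1) by blast
  then show "\<exists>d0. has_depth E q d0 \<and> subset E d0 d" unfolding subset_def by auto
qed (auto dest: free_within_compound)

lemma in_Depth_FDisjD: "in_Depth E k (FDisj E q r) \<Longrightarrow> in_Depth E k q \<and> in_Depth E k r"
proof (intro conjI; erule in_Depth_descend)
  fix d assume "has_depth E (FDisj E q r) d"
  then obtain d1 d2 where "d = succ E (union2 E d1 d2)" "has_depth E q d1" "has_depth E r d2"
    using has_depth_compound(2) by blast
  then show "\<exists>d0. has_depth E q d0 \<and> subset E d0 d" "\<exists>d0. has_depth E r d0 \<and> subset E d0 d"
    unfolding subset_def by auto
qed (auto dest: free_within_compound)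

lemma in_Depth_FExD:
  assumes "in_Depth E k (FEx E i q)"
  shows "in_Depth E k (subst q i a)"
proof (rule in_Depth_descend[OF assms])
  have "is_formula E q" using assms by (simp add: in_Depth_def is_sentence_def)
  moreover have "remove (union2 E (emp E) (sing i)) i = emp E" by (rule extensionality) simp
  ultimately show "free_within E (subst q i a) (emp E)" if "free_within E (FEx E i q) (emp E)"
    using that by (metis free_within_compound(3) free_within_subst)
  fix d assume "has_depth E (FEx E i q) d"
  then obtain d0 where "d = succ E d0" "has_depth E q d0" using has_depth_compound(3) by blast
  then show "\<exists>d0. has_depth E (subst q i a) d0 \<and> subset E d0 d"
    unfolding subset_def by (auto intro: has_depth_subst)
qed simp

lemma in_Depth_derivedD:
  "in_Depth E k (FAnd E p q) \<Longrightarrow> in_Depth E k p \<and> in_Depth E k q"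
  "in_Depth E k (FImp E p q) \<Longrightarrow> in_Depth E k p \<and> in_Depth E k q"
  "in_Depth E k (FIff E p q) \<Longrightarrow> in_Depth E k p \<and> in_Depth E k q"
  "in_Depth E k (FAll E i q) \<Longrightarrow> in_Depth E k (subst q i a)"
proof -
  show and_: "in_Depth E k (FAnd E p q) \<Longrightarrow> in_Depth E k p \<and> in_Depth E k q" for p q
    unfolding FAnd_def using in_Depth_FNegD in_Depth_FDisjD by blast
  show imp: "in_Depth E k (FImp E p q) \<Longrightarrow> in_Depth E k p \<and> in_Depth E k q" for p q
    unfolding FImp_def using in_Depth_FNegD in_Depth_FDisjD by blast
  show "in_Depth E k (FIff E p q) \<Longrightarrow> in_Depth E k p \<and> in_Depth E k q"
    unfolding FIff_def using and_ imp by blast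
  assume all: "in_Depth E k (FAll E i q)"
  then have "in_Depth E k (FEx E i (FNeg E q))" unfolding FAll_def by (rule in_Depth_FNegD)
  then have "in_Depth E k (subst (FNeg E q) i a)" by (rule in_Depth_FExD)
  moreover have "is_formula E q" using all by (simp add: in_Depth_def is_sentence_def)
  ultimately show "in_Depth E k (subst q i a)" using in_Depth_FNegD by simp
qed

end

section \<open>Truth of replacement instances\<close>

text \<open>\<open>unique_code \<phi> y u t\<close> codes \<open>\<forall>u (\<exists>y (y = u \<and> \<phi>) \<longrightarrow> u = t)\<close>: \<open>\<phi>\<close> holds of no \<open>y\<close> other
  than \<open>t\<close>.\<close>
definition unique_code :: "('s \<Rightarrow> 's \<Rightarrow> bool) \<Rightarrow> 's \<Rightarrow> 's \<Rightarrow> 's \<Rightarrow> 's \<Rightarrow> 's" where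
  "unique_code E \<phi> y u t =
     FAll E u (FImp E (FEx E y (FAnd E (FEq E (Var E y) (Var E u)) \<phi>)) (FEq E (Var E u) t))"

definition functional_code :: "('s \<Rightarrow> 's \<Rightarrow> bool) \<Rightarrow> 's \<Rightarrow> 's \<Rightarrow> 's \<Rightarrow> 's \<Rightarrow> 's" where
  "functional_code E \<phi> x y u = FAll E x (FEx E y (FAnd E \<phi> (unique_code E \<phi> y u (Var E y))))"

definition image_code :: "('s \<Rightarrow> 's \<Rightarrow> bool) \<Rightarrow> 's \<Rightarrow> 's \<Rightarrow> 's \<Rightarrow> 's \<Rightarrow> 's \<Rightarrow> 's" where
  "image_code E \<phi> x y v w = FAll E v (FEx E w (FAll E y
     (FIff E (FMem E (Var E y) (Var E w)) (FEx E x (FAnd E (FMem E (Var E x) (Var E v)) \<phi>)))))"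

lemma repl_inst_eq:
  "repl_inst E \<phi> x y z u v w = FAll E z (FImp E (functional_code E \<phi> x y u) (image_code E \<phi> x y v w))"
  unfolding repl_inst_def functional_code_def unique_code_def image_code_def ..

context gb_model
begin

lemma is_formula_repl_codes [simp]:
  "is_formula E (unique_code E \<phi> y u t) \<longleftrightarrow> is_nat E u \<and> is_nat E y \<and> is_formula E \<phi> \<and> is_term E t"
  "is_formula E (functional_code E \<phi> x y u) \<longleftrightarrow> is_nat E x \<and> is_nat E y \<and> is_nat E u \<and> is_formula E \<phi>"
  "is_formula E (image_code E \<phi> x y v w) \<longleftrightarrow>
     is_nat E v \<and> is_nat E w \<and> is_nat E y \<and> is_nat E x \<and> is_formula E \<phi>"
  unfolding unique_code_def functional_code_def image_code_def by auto

lemma subst_unique_code: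
  assumes "is_formula E \<psi>" "is_nat E y" "is_nat E u" "is_term E t" "i \<noteq> u" "y \<noteq> u"
  shows "subst (unique_code E \<psi> y u t) i a =
    unique_code E (if i = y then \<psi> else subst \<psi> i a) y u (subst_term E i a t)"
  using assms unfolding unique_code_def by (cases "i = y") (simp_all add: is_term_subst_term)

lemma subst_functional_code:
  assumes "is_formula E \<psi>" "is_nat E x" "is_nat E y" "is_nat E u" "distinct [i, x, y, u]"
  shows "subst (functional_code E \<psi> x y u) i a = functional_code E (subst \<psi> i a) x y u"
proof -
  have "x \<noteq> i" "y \<noteq> i" using assms(5) by auto
  then show ?thesis using assms unfolding functional_code_def by (simp add: subst_unique_code)
qed

lemma subst_image_code:
  assumes "is_formula E \<psi>" "is_nat E x" "is_nat E y" "is_nat E v" "is_nat E w" "distinct [i, x, y, v, w]"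
  shows "subst (image_code E \<psi> x y v w) i a = image_code E (subst \<psi> i a) x y v w"
proof -
  have "x \<noteq> i" "y \<noteq> i" "v \<noteq> i" "w \<noteq> i" using assms(6) by auto
  then show ?thesis using assms unfolding image_code_def by simp
qed

lemma is_sentence_repl_inst:
  assumes "is_formula E (repl_inst E \<phi> x y z u v w)"
    and \<phi>: "free_within E \<phi> (union2 E (upair E x y) (upair E z z))"
  shows "is_sentence E (repl_inst E \<phi> x y z u v w)"
proof -
  have "free_within E \<phi> B" if "E x B" "E y B" "E z B" for B
    using that by (intro free_within_mono[OF \<phi>]) (auto simp: subset_def)
  then have "free_within E (repl_inst E \<phi> x y z u v w) (emp E)"
    unfolding repl_inst_def
    by (intro free_within_derivedI free_within_FExI free_within_atomicI term_bound_VarI; simp)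
  with assms(1) show ?thesis unfolding is_sentence_def by simp
qed

lemma is_class_subst_pairs:
  assumes "is_formula E \<phi>"
  shows "is_class C (\<lambda>p. \<exists>a b. p = opair E a b \<and> C (subst (subst \<phi> x a) y b) T)"
proof -
  obtain X1 where X1: "\<forall>w. C w X1 \<longleftrightarrow> (\<exists>a q y'. w = opair E a (opair E q y') \<and> is_subst E q x a y')"
    using is_class_subst_graph unfolding is_class_def by blast
  obtain X2 where X2: "\<forall>w. C w X2 \<longleftrightarrow> (\<exists>a q y'. w = opair E a (opair E q y') \<and> is_subst E q y a y')"
    using is_class_subst_graph unfolding is_class_def by blast
  have "(\<exists>a b y1 y2. p = opair E a b \<and> C (opair E a (opair E \<phi> y1)) X1 \<and>
      C (opair E b (opair E y1 y2)) X2 \<and> C y2 T) \<longleftrightarrow>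
    (\<exists>a b. p = opair E a b \<and> C (subst (subst \<phi> x a) y b) T)" for p
    using X1 X2 assms by (auto simp: is_subst_iff_eq)
  then show ?thesis
    by (intro is_classI[of _ "(\<lambda>_. undefined)(1 := \<phi>)" "(\<lambda>_. undefined)(0 := X1, 1 := X2, 2 := T)"
          "PEx 2 (PEx 3 (PEx 4 (PEx 5 (PConj (PPair 0 2 3) (PConj (PEx 6 (PConj (PPair 6 1 4)
             (PEx 7 (PConj (PPair 7 2 6) (PIn 7 0))))) (PConj (PEx 8 (PConj (PPair 8 4 5)
             (PEx 9 (PConj (PPair 9 3 8) (PIn 9 1))))) (PIn 5 2)))))))"]) simp
qed

end

locale gb_truth_class = gb_model E C for E :: "'s \<Rightarrow> 's \<Rightarrow> bool" and C :: "'s \<Rightarrow> 'c \<Rightarrow> bool" +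
  fixes T :: 'c and k :: 's
  assumes truth_class: "truth_class E C T k"
begin

abbreviation holds :: "'s \<Rightarrow> bool" where
  "holds x \<equiv> C x T"

lemmas truth_clauses = truth_class[unfolded truth_class_def, THEN conjunct2, rule_format]

lemma holds_code:
  "in_Depth E k (FEq E (Const E a) (Const E b)) \<Longrightarrow> holds (FEq E (Const E a) (Const E b)) \<longleftrightarrow> a = b"
  "in_Depth E k (FMem E (Const E a) (Const E b)) \<Longrightarrow> holds (FMem E (Const E a) (Const E b)) \<longleftrightarrow> E a b"
  "in_Depth E k (FNeg E q) \<Longrightarrow> holds (FNeg E q) \<longleftrightarrow> \<not> holds q"
  "in_Depth E k (FDisj E q r) \<Longrightarrow> holds (FDisj E q r) \<longleftrightarrow> holds q \<or> holds r"
  "in_Depth E k (FEx E i q) \<Longrightarrow> holds (FEx E i q) \<longleftrightarrow> (\<exists>a. holds (subst q i a))"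
proof -
  show "in_Depth E k (FEq E (Const E a) (Const E b)) \<Longrightarrow> holds (FEq E (Const E a) (Const E b)) \<longleftrightarrow> a = b"
    using truth_clauses[of "FEq E (Const E a) (Const E b)"] by simp
  show "in_Depth E k (FMem E (Const E a) (Const E b)) \<Longrightarrow> holds (FMem E (Const E a) (Const E b)) \<longleftrightarrow> E a b"
    using truth_clauses[of "FMem E (Const E a) (Const E b)"] by simp
  show "in_Depth E k (FNeg E q) \<Longrightarrow> holds (FNeg E q) \<longleftrightarrow> \<not> holds q"
    using truth_clauses[of "FNeg E q"] by simp
  show "in_Depth E k (FDisj E q r) \<Longrightarrow> holds (FDisj E q r) \<longleftrightarrow> holds q \<or> holds r"
    using truth_clauses[of "FDisj E q r"] by simp
  assume "in_Depth E k (FEx E i q)"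
  moreover from this have "is_formula E q" by (simp add: in_Depth_def is_sentence_def)
  ultimately show "holds (FEx E i q) \<longleftrightarrow> (\<exists>a. holds (subst q i a))"
    using truth_clauses[of "FEx E i q"] by (simp add: is_subst_iff_eq)
qed

lemma holds_derived:
  "in_Depth E k (FAnd E p q) \<Longrightarrow> holds (FAnd E p q) \<longleftrightarrow> holds p \<and> holds q"
  "in_Depth E k (FImp E p q) \<Longrightarrow> holds (FImp E p q) \<longleftrightarrow> (holds p \<longrightarrow> holds q)"
  "in_Depth E k (FIff E p q) \<Longrightarrow> holds (FIff E p q) \<longleftrightarrow> (holds p \<longleftrightarrow> holds q)"
  "in_Depth E k (FAll E i q) \<Longrightarrow> holds (FAll E i q) \<longleftrightarrow> (\<forall>a. holds (subst q i a))"
proof -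
  show and_: "in_Depth E k (FAnd E p q) \<Longrightarrow> holds (FAnd E p q) \<longleftrightarrow> holds p \<and> holds q" for p q
    unfolding FAnd_def by (metis holds_code(3,4) in_Depth_FNegD in_Depth_FDisjD)
  show imp: "in_Depth E k (FImp E p q) \<Longrightarrow> holds (FImp E p q) \<longleftrightarrow> (holds p \<longrightarrow> holds q)" for p q
    unfolding FImp_def by (metis holds_code(3,4) in_Depth_FDisjD)
  show "in_Depth E k (FIff E p q) \<Longrightarrow> holds (FIff E p q) \<longleftrightarrow> (holds p \<longleftrightarrow> holds q)"
    unfolding FIff_def by (metis and_ imp in_Depth_derivedD(1))
  assume all: "in_Depth E k (FAll E i q)"
  then have ex: "in_Depth E k (FEx E i (FNeg E q))" unfolding FAll_def by (rule in_Depth_FNegD)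
  have "is_formula E q" using all by (simp add: in_Depth_def is_sentence_def)
  then have "holds (subst (FNeg E q) i a) \<longleftrightarrow> \<not> holds (subst q i a)" for a
    using holds_code(3) in_Depth_FExD[OF ex, of a] by simp
  then show "holds (FAll E i q) \<longleftrightarrow> (\<forall>a. holds (subst q i a))"
    using all holds_code(3,5) ex unfolding FAll_def by simp
qed

lemma holds_unique_code:
  assumes inD: "in_Depth E k (unique_code E \<psi> y u (Const E b))"
    and \<psi>: "is_formula E \<psi>" "free_within E \<psi> B" "\<not> E u B"
    and n: "is_nat E y" "is_nat E u" and "u \<noteq> y"
  shows "holds (unique_code E \<psi> y u (Const E b)) \<longleftrightarrow> (\<forall>e. holds (subst \<psi> y e) \<longrightarrow> e = b)"
proof -
  let ?ex = "\<lambda>e. FEx E y (FAnd E (FEq E (Var E y) (Const E e)) \<psi>)"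
  let ?imp = "\<lambda>e. FImp E (?ex e) (FEq E (Const E e) (Const E b))"
  have inD': "in_Depth E k (FAll E u (FImp E (FEx E y (FAnd E (FEq E (Var E y) (Var E u)) \<psi>))
      (FEq E (Var E u) (Const E b))))"
    using inD unfolding unique_code_def .
  have su: "subst (FImp E (FEx E y (FAnd E (FEq E (Var E y) (Var E u)) \<psi>)) (FEq E (Var E u) (Const E b))) u e
      = ?imp e" for e
    using \<psi> n \<open>u \<noteq> y\<close> subst_vacuous[OF \<psi>(2,3)] by simp
  have "holds (?imp e) \<longleftrightarrow> (holds (subst \<psi> y e) \<longrightarrow> e = b)" for e
  proof -
    have i1: "in_Depth E k (?imp e)" using in_Depth_derivedD(4)[OF inD', of e] su by simp
    then have i2: "in_Depth E k (?ex e)" and i3: "in_Depth E k (FEq E (Const E e) (Const E b))"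
      using in_Depth_derivedD(2) by blast+
    have sy: "subst (FAnd E (FEq E (Var E y) (Const E e)) \<psi>) y c = FAnd E (FEq E (Const E c) (Const E e)) (subst \<psi> y c)" for c
      using \<psi> n by simp
    have i4: "in_Depth E k (FAnd E (FEq E (Const E c) (Const E e)) (subst \<psi> y c))" for c
      using in_Depth_FExD[OF i2, of c] sy by simp
    have "holds (FAnd E (FEq E (Const E c) (Const E e)) (subst \<psi> y c)) \<longleftrightarrow> c = e \<and> holds (subst \<psi> y c)" for c
      using holds_derived(1)[OF i4] holds_code(1) in_Depth_derivedD(1)[OF i4] by simp
    then have "holds (?ex e) \<longleftrightarrow> holds (subst \<psi> y e)" using holds_code(5)[OF i2] sy by simp
    then show ?thesis using holds_derived(2)[OF i1] holds_code(1)[OF i3] by simp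
  qed
  then show ?thesis using holds_derived(4)[OF inD'] su unfolding unique_code_def by simp
qed

lemma holds_functional_code:
  assumes inD: "in_Depth E k (functional_code E \<psi> x y u)"
    and \<psi>: "is_formula E \<psi>" "free_within E \<psi> B" "\<not> E u B"
    and n: "is_nat E y" "is_nat E u" and d: "distinct [x, y, u]"
  shows "holds (functional_code E \<psi> x y u) \<longleftrightarrow>
    (\<forall>a. \<exists>b. holds (subst (subst \<psi> x a) y b) \<and> (\<forall>e. holds (subst (subst \<psi> x a) y e) \<longrightarrow> e = b))"
proof -
  have inD': "in_Depth E k (FAll E x (FEx E y (FAnd E \<psi> (unique_code E \<psi> y u (Var E y)))))"
    using inD unfolding functional_code_def .
  have "holds (subst (FEx E y (FAnd E \<psi> (unique_code E \<psi> y u (Var E y)))) x a) \<longleftrightarrow>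
    (\<exists>b. holds (subst (subst \<psi> x a) y b) \<and> (\<forall>e. holds (subst (subst \<psi> x a) y e) \<longrightarrow> e = b))" for a
  proof -
    define \<psi>a where "\<psi>a = subst \<psi> x a"
    have \<psi>a: "is_formula E \<psi>a" "free_within E \<psi>a (remove B x)" "\<not> E u (remove B x)"
      using \<psi> by (simp_all add: \<psi>a_def free_within_subst)
    have "y \<noteq> x" "u \<noteq> y" using d by auto
    then have sx: "subst (FEx E y (FAnd E \<psi> (unique_code E \<psi> y u (Var E y)))) x a
        = FEx E y (FAnd E \<psi>a (unique_code E \<psi>a y u (Var E y)))"
      using \<psi> n d by (simp add: \<psi>a_def subst_unique_code)
    have i1: "in_Depth E k (FEx E y (FAnd E \<psi>a (unique_code E \<psi>a y u (Var E y))))"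
      using in_Depth_derivedD(4)[OF inD', of a] sx by simp
    have sy: "subst (FAnd E \<psi>a (unique_code E \<psi>a y u (Var E y))) y b
        = FAnd E (subst \<psi>a y b) (unique_code E \<psi>a y u (Const E b))" for b
      using \<psi>a n d by (simp add: subst_unique_code)
    have i2: "in_Depth E k (FAnd E (subst \<psi>a y b) (unique_code E \<psi>a y u (Const E b)))" for b
      using in_Depth_FExD[OF i1, of b] sy by simp
    have "holds (FAnd E (subst \<psi>a y b) (unique_code E \<psi>a y u (Const E b))) \<longleftrightarrow>
        holds (subst \<psi>a y b) \<and> (\<forall>e. holds (subst \<psi>a y e) \<longrightarrow> e = b)" for b
      using holds_derived(1)[OF i2] holds_unique_code[OF _ \<psi>a n] in_Depth_derivedD(1)[OF i2] \<open>u \<noteq> y\<close>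
      by simp
    then show ?thesis using holds_code(5)[OF i1] sx sy by (simp add: \<psi>a_def)
  qed
  then show ?thesis using holds_derived(4)[OF inD'] unfolding functional_code_def by simp
qed

lemma holds_image_clause:
  assumes inD: "in_Depth E k (FAll E y (FIff E (FMem E (Var E y) (Const E f))
      (FEx E x (FAnd E (FMem E (Var E x) (Const E e)) \<psi>))))"
    and \<psi>: "is_formula E \<psi>" and n: "is_nat E x" "is_nat E y" and "x \<noteq> y"
  shows "holds (FAll E y (FIff E (FMem E (Var E y) (Const E f))
      (FEx E x (FAnd E (FMem E (Var E x) (Const E e)) \<psi>)))) \<longleftrightarrow>
    (\<forall>b. E b f \<longleftrightarrow> (\<exists>a. E a e \<and> holds (subst (subst \<psi> y b) x a)))"
proof -
  have "holds (subst (FIff E (FMem E (Var E y) (Const E f))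
      (FEx E x (FAnd E (FMem E (Var E x) (Const E e)) \<psi>))) y b) \<longleftrightarrow>
    (E b f \<longleftrightarrow> (\<exists>a. E a e \<and> holds (subst (subst \<psi> y b) x a)))" for b
  proof -
    define \<psi>b where "\<psi>b = subst \<psi> y b"
    have sy: "subst (FIff E (FMem E (Var E y) (Const E f))
        (FEx E x (FAnd E (FMem E (Var E x) (Const E e)) \<psi>))) y b
      = FIff E (FMem E (Const E b) (Const E f)) (FEx E x (FAnd E (FMem E (Var E x) (Const E e)) \<psi>b))"
      using \<psi> n \<open>x \<noteq> y\<close> by (simp add: \<psi>b_def)
    have i1: "in_Depth E k (FIff E (FMem E (Const E b) (Const E f))
        (FEx E x (FAnd E (FMem E (Var E x) (Const E e)) \<psi>b)))"
      using in_Depth_derivedD(4)[OF inD, of b] sy by simp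
    then have i2: "in_Depth E k (FMem E (Const E b) (Const E f))"
      and i3: "in_Depth E k (FEx E x (FAnd E (FMem E (Var E x) (Const E e)) \<psi>b))"
      using in_Depth_derivedD(3) by blast+
    have sx: "subst (FAnd E (FMem E (Var E x) (Const E e)) \<psi>b) x a
        = FAnd E (FMem E (Const E a) (Const E e)) (subst \<psi>b x a)" for a
      using \<psi> n by (simp add: \<psi>b_def)
    have i4: "in_Depth E k (FAnd E (FMem E (Const E a) (Const E e)) (subst \<psi>b x a))" for a
      using in_Depth_FExD[OF i3, of a] sx by simp
    have "holds (FAnd E (FMem E (Const E a) (Const E e)) (subst \<psi>b x a)) \<longleftrightarrow> E a e \<and> holds (subst \<psi>b x a)" for a
      using holds_derived(1)[OF i4] holds_code(2) in_Depth_derivedD(1)[OF i4] by simp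
    then show ?thesis
      using holds_derived(3)[OF i1] holds_code(2)[OF i2] holds_code(5)[OF i3] sy sx by (simp add: \<psi>b_def)
  qed
  then show ?thesis using holds_derived(4)[OF inD] by simp
qed

lemma holds_image_code:
  assumes inD: "in_Depth E k (image_code E \<psi> x y v w)"
    and \<psi>: "is_formula E \<psi>" "free_within E \<psi> B" "\<not> E v B" "\<not> E w B"
    and n: "is_nat E x" "is_nat E y" "is_nat E v" "is_nat E w" and d: "distinct [x, y, v, w]"
  shows "holds (image_code E \<psi> x y v w) \<longleftrightarrow>
    (\<forall>e. \<exists>f. \<forall>b. E b f \<longleftrightarrow> (\<exists>a. E a e \<and> holds (subst (subst \<psi> y b) x a)))"
proof -
  let ?body = "\<lambda>t. FEx E w (FAll E y (FIff E (FMem E (Var E y) (Var E w))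
    (FEx E x (FAnd E (FMem E (Var E x) t) \<psi>))))"
  let ?clause = "\<lambda>e f. FAll E y (FIff E (FMem E (Var E y) (Const E f))
    (FEx E x (FAnd E (FMem E (Var E x) (Const E e)) \<psi>)))"
  have inD': "in_Depth E k (FAll E v (?body (Var E v)))" using inD unfolding image_code_def .
  have d': "x \<noteq> v" "y \<noteq> v" "w \<noteq> v" "x \<noteq> w" "y \<noteq> w" using d by auto
  have sv: "subst (?body (Var E v)) v e = ?body (Const E e)" for e
    using \<psi> n d d' subst_vacuous[OF \<psi>(2,3)] by simp
  have sw: "subst (FAll E y (FIff E (FMem E (Var E y) (Var E w))
      (FEx E x (FAnd E (FMem E (Var E x) (Const E e)) \<psi>)))) w f = ?clause e f" for e f
    using \<psi> n d d' subst_vacuous[OF \<psi>(2,4)] by simp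
  have "holds (?body (Const E e)) \<longleftrightarrow> (\<exists>f. \<forall>b. E b f \<longleftrightarrow> (\<exists>a. E a e \<and> holds (subst (subst \<psi> y b) x a)))" for e
  proof -
    have i1: "in_Depth E k (?body (Const E e))" using in_Depth_derivedD(4)[OF inD', of e] sv by simp
    have "in_Depth E k (?clause e f)" for f using in_Depth_FExD[OF i1, of f] sw by simp
    then show ?thesis using holds_code(5)[OF i1] sw holds_image_clause[OF _ \<psi>(1) n(1,2)] d by simp
  qed
  then show ?thesis using holds_derived(4)[OF inD'] sv unfolding image_code_def by simp
qed

lemma holds_repl_inst:
  assumes inD: "in_Depth E k (repl_inst E \<phi> x y z u v w)"
    and \<phi>: "is_formula E \<phi>" "free_within E \<phi> (union2 E (upair E x y) (upair E z z))"
    and n: "is_nat E x" "is_nat E y" "is_nat E z" "is_nat E u" "is_nat E v" "is_nat E w"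
    and d: "distinct [x, y, z, u, v, w]"
  shows "holds (repl_inst E \<phi> x y z u v w)"
proof -
  have inD': "in_Depth E k (FAll E z (FImp E (functional_code E \<phi> x y u) (image_code E \<phi> x y v w)))"
    using inD unfolding repl_inst_eq .
  have "holds (subst (FImp E (functional_code E \<phi> x y u) (image_code E \<phi> x y v w)) z c)" for c
  proof -
    define \<phi>c where "\<phi>c = subst \<phi> z c"
    define B where "B = remove (union2 E (upair E x y) (upair E z z)) z"
    have \<phi>c: "is_formula E \<phi>c" "free_within E \<phi>c B" and B: "\<not> E u B" "\<not> E v B" "\<not> E w B"
      using \<phi> d by (auto simp: \<phi>c_def B_def free_within_subst)
    have sz: "subst (FImp E (functional_code E \<phi> x y u) (image_code E \<phi> x y v w)) z c
        = FImp E (functional_code E \<phi>c x y u) (image_code E \<phi>c x y v w)"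
    proof -
      have "distinct [z, x, y, u]" "distinct [z, x, y, v, w]" using d by auto
      then show ?thesis using \<phi> n by (simp add: \<phi>c_def subst_functional_code subst_image_code)
    qed
    have i: "in_Depth E k (FImp E (functional_code E \<phi>c x y u) (image_code E \<phi>c x y v w))"
      using in_Depth_derivedD(4)[OF inD', of c] sz by simp
    let ?R = "\<lambda>a b. holds (subst (subst \<phi>c x a) y b)"
    have "holds (image_code E \<phi>c x y v w)" if "holds (functional_code E \<phi>c x y u)"
    proof -
      have "\<forall>a. \<exists>b. ?R a b \<and> (\<forall>e. ?R a e \<longrightarrow> e = b)"
        using that holds_functional_code[OF _ \<phi>c B(1) n(2,4)] in_Depth_derivedD(2)[OF i] d by simp
      then have "?R a b \<Longrightarrow> ?R a b' \<Longrightarrow> b = b'" for a b b' by metis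
      \<comment> \<open>the relation \<open>?R\<close> is a class, defined with \<open>T\<close> as class parameter\<close>
      then have "\<exists>f. \<forall>b. E b f \<longleftrightarrow> (\<exists>a. E a e \<and> ?R a b)" for e
        by (intro functional_image is_class_subst_pairs \<phi>c(1))
      moreover have "subst (subst \<phi>c y b) x a = subst (subst \<phi>c x a) y b" for a b
        using subst_commute[OF _ \<phi>c(1), of x y] d by simp
      ultimately show ?thesis
        using holds_image_code[OF _ \<phi>c B(2,3) n(1,2,5,6)] in_Depth_derivedD(2)[OF i] d by simp
    qed
    then show ?thesis using holds_derived(2)[OF i] sz by simp
  qed
  then show ?thesis using holds_derived(4)[OF inD'] unfolding repl_inst_eq by simp
qed

end

theorem lemma3p12:
  fixes E :: "'s \<Rightarrow> 's \<Rightarrow> bool" and C :: "'s \<Rightarrow> 'c \<Rightarrow> bool"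
  assumes "GB_plus E C \<or> GB_minus E C"
    and "is_repl_instance E \<sigma>"
    and "has_depth E \<sigma> d"
    and "C_Most E C d"
  shows "T_Most E C \<sigma>"
proof -
  have "GB_base E C" using assms(1) unfolding GB_plus_def GB_minus_def by blast
  obtain T where "is_nat E d" and T: "truth_class E C T d"
    using assms(4) unfolding C_Most_def by blast
  interpret gb_truth_class E C T d by unfold_locales fact+
  obtain \<phi> x y z u v w where \<phi>: "is_LZF E \<phi>" "free_within E \<phi> (union2 E (upair E x y) (upair E z z))"
    and n: "is_nat E x" "is_nat E y" "is_nat E z" "is_nat E u" "is_nat E v" "is_nat E w"
    and d: "distinct [x, y, z, u, v, w]" and \<sigma>: "\<sigma> = repl_inst E \<phi> x y z u v w"
    using assms(2) unfolding is_repl_instance_def by blast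
  have "is_sentence E \<sigma>"
    using is_sentence_repl_inst[OF _ \<phi>(2)] assms(3) \<sigma> unfolding has_depth_def by blast
  moreover have "subset E d d" unfolding subset_def by blast
  ultimately have "in_Depth E d \<sigma>" unfolding in_Depth_def using assms(3) by blast
  then have "C \<sigma> T" using holds_repl_inst[OF _ is_formula_LZF[OF \<phi>(1)] \<phi>(2) n d] \<sigma> by simp
  then show ?thesis
    unfolding T_Most_def using \<open>is_sentence E \<sigma>\<close> \<open>subset E d d\<close> assms(3) \<open>is_nat E d\<close> T by blast
qed

end
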